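(* Let $\mathcal C$ be a $\Delta$-complex labeled over $B(X,P)$, let $C$ be a $k$-cell of $\mathcal C$ with $k\ge2$ and characteristic map $\sigma\colon\Delta^k\to\mathcal C$. Let $q$ be any closed generalized path based at $v_0$ in $\partial\Delta^k$ (where $\partial\Delta^k$ is regarded as a $\Delta$-complex whose cells are the proper faces of $\Delta^k$), and let $p=\sigma(q)$ be its image generalized path in $\mathcal C$ (each face $F$ of $q$ replaced by the cell of $\mathcal C$ whose characteristic map is $\sigma|_F$). Then $\ell(C)\le\ell(p)$ in $M(X,P)$.
   Context: A $\Delta$-complex is a CW-complex in which each $k$-cell $c$ has a distinguished characteristic map $\sigma_c\colon\Delta^k\to\mathcal C$, $\Delta^k=[v_0,\dots,v_k]$ the standard simplex with ordered vertices, such that the restriction of $\sigma_c$ to each $(k-1)$-face (identified order-preservingly with $\Delta^{k-1}$) is the distinguished characteristic map of a $(k-1)$-cell. The root of $c$ is $\alpha(c)=\sigma_c(v_0)$; a $1$-cell $e$ is directed from $\alpha(e)=\sigma_e(v_0)$ to $\omega(e)=\sigma_e(v_1)$, and a formal inverse $e^{-1}$ with $\alpha(e^{-1})=\omega(e)$, $\omega(e^{-1})=\alpha(e)$ is adjoined. A generalized path is a sequence $e_1\cdots e_s$ ($s\ge0$) where each $e_i$ is a cell of dimension $\ge2$, a $1$-cell, or the formal inverse of a $1$-cell, with $\omega(e_{i-1})=\alpha(e_i)$, where for cells of dimension $\ge2$ one sets $\omega(c)=\alpha(c)$; it is closed at $v$ if it starts and ends at $v$. An immersion is a continuous map that is a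 local homeomorphism onto its image and commutes with characteristic maps. $B(X,P)$ is a $\Delta$-complex with one $0$-cell, $1$-cells indexed by $X$, $k$-cells ($2\le k\le n$) indexed by $P_k$, index sets pairwise disjoint, $P=\bigcup P_k$. $\mathcal C$ is labeled over $B(X,P)$ via an immersion $f_{\mathcal C}\colon\mathcal C\to B(X,P)$; $\ell(c)$ is the index of $f_{\mathcal C}(c)$, $\ell(e^{-1})=\ell(e)^{-1}$, and the label of a generalized path is the concatenated word in $(X\cup X^{-1}\cup P)^*$, read in $M(X,P)$. Boundary labels: for a $k$-cell $c$ ($k\ge2$) with characteristic map $\sigma$, let $c_i$ be the $(k-1)$-cell whose characteristic map is $\sigma$ restricted to the face omitting $v_i$, and $e(c)=\sigma([v_0,v_1])$; $bl(c)=\ell(\sigma[v_0,v_1])\ell(\sigma[v_1,v_2])\ell(\sigma[v_0,v_2])^{-1}$ if $k=2$, and $bl(c)=\ell(c_k)\cdots\ell(c_1)\ell(e(c))\ell(c_0)\ell(e(c))^{-1}$ if $k\ge3$; $bl(\rho)$ for $\rho\in P$ is the boundary label of the cell of $B(X,P)$ labeled $\rho$. $M(X,P)$ is the inverse monoid presented by generators $X\cup P$ and relations $\rho^2=\rho$, $\rho=\rho\,bl(\rho)$ for $\rho\in P$. Natural partial order: $a\le b$ iff $a=eb$ for an idempotent $e$. *)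

theory Defs
  imports Main
begin

text \<open>A Delta-complex is encoded combinatorially by its set of cells S, a dimension
function and face operators d i c (the cell whose characteristic map is the
restriction of sigma_c to the face omitting vertex v_i).\<close>

definition semisimplicial :: "'c set \<Rightarrow> ('c \<Rightarrow> nat) \<Rightarrow> (nat \<Rightarrow> 'c \<Rightarrow> 'c) \<Rightarrow> bool" where
  "semisimplicial S dim d \<longleftrightarrow>
     (\<forall>c\<in>S. \<forall>i\<le>dim c. 0 < dim c \<longrightarrow> d i c \<in> S \<and> dim (d i c) = dim c - 1) \<and>
     (\<forall>c\<in>S. \<forall>i j. i < j \<and> j \<le> dim c \<and> 2 \<le> dim c \<longrightarrow> d i (d j c) = d (j - 1) (d i c))"

text \<open>The cell whose characteristic map is sigma_c restricted to the face spanned by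
the vertices in F (a subset of {0..dim c}), identified order-preservingly with a
standard simplex: delete the complementary vertices, highest index first.\<close>

definition iface :: "(nat \<Rightarrow> 'c \<Rightarrow> 'c) \<Rightarrow> ('c \<Rightarrow> nat) \<Rightarrow> 'c \<Rightarrow> nat set \<Rightarrow> 'c" where
  "iface d dim c F = foldl (\<lambda>x j. d j x) c (rev (sorted_list_of_set ({0..dim c} - F)))"

definition ss_map :: "'c set \<Rightarrow> ('c \<Rightarrow> nat) \<Rightarrow> (nat \<Rightarrow> 'c \<Rightarrow> 'c) \<Rightarrow>
    'b set \<Rightarrow> ('b \<Rightarrow> nat) \<Rightarrow> (nat \<Rightarrow> 'b \<Rightarrow> 'b) \<Rightarrow> ('c \<Rightarrow> 'b) \<Rightarrow> bool" where
  "ss_map S dim d B dimB dB f \<longleftrightarrow>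
     (\<forall>c\<in>S. f c \<in> B \<and> dimB (f c) = dim c \<and>
        (\<forall>i\<le>dim c. 0 < dim c \<longrightarrow> f (d i c) = dB i (f c)))"

text \<open>Immersion: a map commuting with characteristic maps that is locally injective,
i.e. injective on the corners (c, j) at each vertex.\<close>

definition immersion :: "'c set \<Rightarrow> ('c \<Rightarrow> nat) \<Rightarrow> (nat \<Rightarrow> 'c \<Rightarrow> 'c) \<Rightarrow>
    'b set \<Rightarrow> ('b \<Rightarrow> nat) \<Rightarrow> (nat \<Rightarrow> 'b \<Rightarrow> 'b) \<Rightarrow> ('c \<Rightarrow> 'b) \<Rightarrow> bool" where
  "immersion S dim d B dimB dB f \<longleftrightarrow> ss_map S dim d B dimB dB f \<and>
     (\<forall>c\<in>S. \<forall>c'\<in>S. \<forall>j. j \<le> dim c \<and> j \<le> dim c' \<and> f c = f c' \<and>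
        iface d dim c {j} = iface d dim c' {j} \<longrightarrow> c = c')"

text \<open>B(X,P): a Delta-complex with exactly one 0-cell and cells of dimension at most n.
Its 1-cells play the role of X, its k-cells (k \<ge> 2) the role of P_k (each cell is its
own index, so the index sets are automatically pairwise disjoint).\<close>

definition is_BXP :: "nat \<Rightarrow> 'b set \<Rightarrow> ('b \<Rightarrow> nat) \<Rightarrow> (nat \<Rightarrow> 'b \<Rightarrow> 'b) \<Rightarrow> bool" where
  "is_BXP n B dimB dB \<longleftrightarrow> semisimplicial B dimB dB \<and>
     (\<exists>!v. v \<in> B \<and> dimB v = 0) \<and> (\<forall>b\<in>B. dimB b \<le> n)"

text \<open>Letters: (b, False) is the generator b, (b, True) its formal inverse.\<close>

definition alph :: "'b set \<Rightarrow> ('b \<Rightarrow> nat) \<Rightarrow> ('b \<times> bool) set" where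
  "alph B dimB = {(b, e). b \<in> B \<and> 1 \<le> dimB b}"

definition winv :: "('b \<times> bool) list \<Rightarrow> ('b \<times> bool) list" where
  "winv w = rev (map (\<lambda>(b, e). (b, \<not> e)) w)"

definition bl :: "('b \<Rightarrow> nat) \<Rightarrow> (nat \<Rightarrow> 'b \<Rightarrow> 'b) \<Rightarrow> 'b \<Rightarrow> ('b \<times> bool) list" where
  "bl dimB dB b =
    (if dimB b = 2 then [(dB 2 b, False), (dB 0 b, False), (dB 1 b, True)]
     else (let e = iface dB dimB b {0, 1} in
       map (\<lambda>i. (dB i b, False)) (rev [1..<dimB b + 1]) @
       [(e, False), (dB 0 b, False), (e, True)]))"

text \<open>The congruence on words defining M(X,P) as an inverse monoid presentation:
Wagner congruence plus the defining relations.\<close>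

inductive Meq :: "'b set \<Rightarrow> ('b \<Rightarrow> nat) \<Rightarrow> (nat \<Rightarrow> 'b \<Rightarrow> 'b) \<Rightarrow>
    ('b \<times> bool) list \<Rightarrow> ('b \<times> bool) list \<Rightarrow> bool"
  for B dimB dB where
  refl: "Meq B dimB dB u u"
| sym: "Meq B dimB dB u v \<Longrightarrow> Meq B dimB dB v u"
| trans: "Meq B dimB dB u v \<Longrightarrow> Meq B dimB dB v w \<Longrightarrow> Meq B dimB dB u w"
| cong: "Meq B dimB dB u v \<Longrightarrow> x \<in> lists (alph B dimB) \<Longrightarrow> y \<in> lists (alph B dimB) \<Longrightarrow>
         Meq B dimB dB (x @ u @ y) (x @ v @ y)"
| wagner1: "u \<in> lists (alph B dimB) \<Longrightarrow> Meq B dimB dB (u @ winv u @ u) u"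
| wagner2: "u \<in> lists (alph B dimB) \<Longrightarrow> v \<in> lists (alph B dimB) \<Longrightarrow>
         Meq B dimB dB (u @ winv u @ v @ winv v) (v @ winv v @ u @ winv u)"
| idem: "b \<in> B \<Longrightarrow> 2 \<le> dimB b \<Longrightarrow> Meq B dimB dB [(b, False), (b, False)] [(b, False)]"
| rel: "b \<in> B \<Longrightarrow> 2 \<le> dimB b \<Longrightarrow> Meq B dimB dB [(b, False)] ((b, False) # bl dimB dB b)"

definition Mle :: "'b set \<Rightarrow> ('b \<Rightarrow> nat) \<Rightarrow> (nat \<Rightarrow> 'b \<Rightarrow> 'b) \<Rightarrow>
    ('b \<times> bool) list \<Rightarrow> ('b \<times> bool) list \<Rightarrow> bool" where
  "Mle B dimB dB a b \<longleftrightarrow>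
     (\<exists>w \<in> lists (alph B dimB). Meq B dimB dB (w @ w) w \<and> Meq B dimB dB a (w @ b))"

text \<open>A step is (F, iv): F the vertex set of a proper face of Delta^k of dimension \<ge> 1,
iv = True marks the formal inverse of a 1-cell.\<close>

definition bd_step :: "nat \<Rightarrow> nat set \<times> bool \<Rightarrow> bool" where
  "bd_step k s \<longleftrightarrow> (case s of (F, iv) \<Rightarrow>
     F \<subseteq> {0..k} \<and> F \<noteq> {0..k} \<and> 2 \<le> card F \<and> (iv \<longrightarrow> card F = 2))"

definition st_alpha :: "nat set \<times> bool \<Rightarrow> nat" where
  "st_alpha s = (case s of (F, iv) \<Rightarrow> if iv then Max F else Min F)"

definition st_omega :: "nat set \<times> bool \<Rightarrow> nat" where
  "st_omega s = (case s of (F, iv) \<Rightarrow>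
     if card F = 2 then (if iv then Min F else Max F) else Min F)"

definition closed_gpath_bd :: "nat \<Rightarrow> nat \<Rightarrow> (nat set \<times> bool) list \<Rightarrow> bool" where
  "closed_gpath_bd k v q \<longleftrightarrow> (\<forall>s \<in> set q. bd_step k s) \<and>
     (q = [] \<or> (st_alpha (hd q) = v \<and> st_omega (last q) = v \<and>
        (\<forall>i. Suc i < length q \<longrightarrow> st_omega (q ! i) = st_alpha (q ! Suc i))))"

definition img_label :: "('c \<Rightarrow> 'b) \<Rightarrow> (nat \<Rightarrow> 'c \<Rightarrow> 'c) \<Rightarrow> ('c \<Rightarrow> nat) \<Rightarrow> 'c \<Rightarrow>
    (nat set \<times> bool) list \<Rightarrow> ('b \<times> bool) list" where
  "img_label f d dim c q = map (\<lambda>(F, iv). (f (iface d dim c F), iv)) q"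

end

theory Submission
  imports Defs
begin

text \<open>Let \<open>\<rho>\<close> be the (idempotent) label of the cell \<open>C\<close>, \<open>X F\<close> the label of the face of \<open>C\<close>
  spanned by the vertex set \<open>F\<close>, and \<open>g a = X {0, a}\<close> the edge from the root to \<open>a\<close> (\<open>g 0 = 1\<close>).
  One shows \<open>\<rho> g a X = \<rho> g b\<close> whenever \<open>X\<close> is the label of a step of a path in \<open>\<partial>\<Delta>\<^sup>k\<close> from
  \<open>a\<close> to \<open>b\<close>, by induction on the dimension of the cell. For a triangle this is
  \<open>\<rho> = \<rho> X\<^sub>0\<^sub>1 X\<^sub>1\<^sub>2 X\<^sub>0\<^sub>2\<^sup>-\<^sup>1\<close> rearranged with Wagner's identities. For a higher cell the relation
  \<open>\<rho> = \<rho> bl(\<rho>)\<close> shows that \<open>\<rho>\<close> absorbs every facet \<open>\<rho>\<^sub>i\<close>, \<open>i \<ge> 1\<close>, so the identities of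
  these facets lift to \<open>\<rho>\<close>; the remaining facet \<open>\<rho>\<^sub>0\<close>, opposite the root, is handled by the
  relation itself. Chaining the identities along a closed path \<open>p\<close> at the root gives \<open>\<rho> p = \<rho>\<close>,
  i.e. \<open>\<rho> \<le> p\<close> in the natural order.\<close>

section \<open>Inverse monoids\<close>

locale monoid_on =
  fixes G :: "'a set" and mul :: "'a \<Rightarrow> 'a \<Rightarrow> 'a" (infixl "\<odot>" 70) and one :: 'a
  assumes mul_closed[simp]: "x \<in> G \<Longrightarrow> y \<in> G \<Longrightarrow> x \<odot> y \<in> G"
    and one_closed[simp]: "one \<in> G"
    and assoc[simp]: "x \<in> G \<Longrightarrow> y \<in> G \<Longrightarrow> z \<in> G \<Longrightarrow> x \<odot> y \<odot> z = x \<odot> (y \<odot> z)"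
    and left_unit[simp]: "x \<in> G \<Longrightarrow> one \<odot> x = x"
    and right_unit[simp]: "x \<in> G \<Longrightarrow> x \<odot> one = x"
begin

lemma assoc_left: "x \<in> G \<Longrightarrow> y \<in> G \<Longrightarrow> z \<in> G \<Longrightarrow> x \<odot> (y \<odot> z) = x \<odot> y \<odot> z"
  by simp

text \<open>Needed before inverses are known to be unique: it shows that the defining relations of
  \<open>M(X,P)\<close> are closed under formal inversion.\<close>

lemma wagner_inverse_of_idem:
  assumes G: "a \<in> G" "b \<in> G"
    and aba: "a \<odot> b \<odot> a = a" and bab: "b \<odot> a \<odot> b = b"
    and comm: "(b \<odot> a) \<odot> (a \<odot> b) = (a \<odot> b) \<odot> (b \<odot> a)"
    and aa: "a \<odot> a = a"
  shows "b = a"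
proof -
  have comm_y: "b \<odot> (a \<odot> (a \<odot> (b \<odot> y))) = a \<odot> (b \<odot> (b \<odot> (a \<odot> y)))" if "y \<in> G" for y
    using comm G that by (simp del: assoc add: assoc_left)
  have aa_y: "a \<odot> (a \<odot> y) = a \<odot> y" if "y \<in> G" for y
    using aa G that by (simp del: assoc add: assoc_left)
  have aba_y: "a \<odot> (b \<odot> (a \<odot> (b \<odot> y))) = a \<odot> (b \<odot> y)" if "y \<in> G" for y
    using aba G that by (simp del: assoc add: assoc_left)
  have baba: "b \<odot> (a \<odot> (b \<odot> a)) = b \<odot> a"
    using bab G by (simp del: assoc add: assoc_left)
  have b_eq: "b = a \<odot> (b \<odot> (b \<odot> a))"
  proof -
    have "b = b \<odot> (a \<odot> b)" using bab G by simp
    also have "\<dots> = b \<odot> (a \<odot> (a \<odot> b))" using aa_y G by simp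
    also have "\<dots> = a \<odot> (b \<odot> (b \<odot> a))" using comm G by simp
    finally show ?thesis .
  qed
  have bb: "b \<odot> b = b"
  proof -
    have "b \<odot> b = (a \<odot> (b \<odot> (b \<odot> a))) \<odot> (a \<odot> (b \<odot> (b \<odot> a)))"
      using arg_cong2[OF b_eq b_eq, of "(\<odot>)"] .
    also have "\<dots> = a \<odot> (b \<odot> (b \<odot> (a \<odot> (a \<odot> (b \<odot> (b \<odot> a))))))" using G by simp
    also have "\<dots> = a \<odot> (b \<odot> (a \<odot> (b \<odot> (b \<odot> (a \<odot> (b \<odot> a))))))" using comm_y G by simp
    also have "\<dots> = a \<odot> (b \<odot> (b \<odot> (a \<odot> (b \<odot> a))))" using aba_y G by simp
    also have "\<dots> = b" using baba b_eq G by simp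
    finally show ?thesis .
  qed
  have "a = a \<odot> (b \<odot> a)" using aba G by simp
  also have "\<dots> = a \<odot> (b \<odot> (b \<odot> a))" using bb G by (simp del: assoc add: assoc_left)
  finally show "b = a" using b_eq by simp
qed

lemma left_mul_eq_lift:
  assumes "r \<odot> s = r" "r \<in> G" "s \<in> G" "y \<in> G" "z \<in> G" and "s \<odot> y = s \<odot> z"
  shows "r \<odot> y = r \<odot> z"
  by (metis assms assoc)

definition mprod :: "'a list \<Rightarrow> 'a" where
  "mprod xs = foldr (\<odot>) xs one"

lemma mprod_Nil[simp]: "mprod [] = one"
  by (simp add: mprod_def)

lemma mprod_Cons[simp]: "mprod (x # xs) = x \<odot> mprod xs"
  by (simp add: mprod_def)

lemma mprod_closed: "set xs \<subseteq> G \<Longrightarrow> mprod xs \<in> G"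
  by (induction xs) auto

lemma mprod_append: "set xs \<subseteq> G \<Longrightarrow> set ys \<subseteq> G \<Longrightarrow> mprod (xs @ ys) = mprod xs \<odot> mprod ys"
  by (induction xs) (auto simp: mprod_closed)

end

locale inverse_monoid = monoid_on +
  fixes inv :: "'a \<Rightarrow> 'a"
  assumes inv_closed[simp]: "x \<in> G \<Longrightarrow> inv x \<in> G"
    and mul_inv_mul: "x \<in> G \<Longrightarrow> x \<odot> inv x \<odot> x = x"
    and inv_inv[simp]: "x \<in> G \<Longrightarrow> inv (inv x) = x"
    and inv_mul_distrib: "x \<in> G \<Longrightarrow> y \<in> G \<Longrightarrow> inv (x \<odot> y) = inv y \<odot> inv x"
    and mul_inv_commute:
      "x \<in> G \<Longrightarrow> y \<in> G \<Longrightarrow> (x \<odot> inv x) \<odot> (y \<odot> inv y) = (y \<odot> inv y) \<odot> (x \<odot> inv x)"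
    and inv_one[simp]: "inv one = one"
begin

lemma mul_inv_mul'[simp]: "x \<in> G \<Longrightarrow> x \<odot> (inv x \<odot> x) = x"
  using mul_inv_mul by simp

lemma mul_inv_mul_left[simp]: "x \<in> G \<Longrightarrow> y \<in> G \<Longrightarrow> x \<odot> (inv x \<odot> (x \<odot> y)) = x \<odot> y"
  using mul_inv_mul[of x] by (simp del: assoc add: assoc_left)

definition idem :: "'a \<Rightarrow> bool" where
  "idem e \<longleftrightarrow> e \<in> G \<and> e \<odot> e = e"

lemma idemD: "idem e \<Longrightarrow> e \<in> G" "idem e \<Longrightarrow> e \<odot> e = e"
  by (auto simp: idem_def)

lemma idem_left: "idem e \<Longrightarrow> z \<in> G \<Longrightarrow> e \<odot> (e \<odot> z) = e \<odot> z"
  by (metis assoc idemD)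

lemma inv_idem: assumes "idem e" shows "inv e = e"
proof (rule wagner_inverse_of_idem)
  show "e \<in> G" "inv e \<in> G" "e \<odot> e = e" using assms by (auto simp: idem_def)
  then show "e \<odot> inv e \<odot> e = e" "inv e \<odot> e \<odot> inv e = inv e"
    using mul_inv_mul[of e] mul_inv_mul[of "inv e"] by simp_all
  show "inv e \<odot> e \<odot> (e \<odot> inv e) = e \<odot> inv e \<odot> (inv e \<odot> e)"
    using mul_inv_commute[of "inv e" e] \<open>e \<in> G\<close> by (simp del: assoc)
qed

lemma idem_mul_inv: "x \<in> G \<Longrightarrow> idem (x \<odot> inv x)"
  by (simp add: idem_def)

lemma idem_inv_mul: "x \<in> G \<Longrightarrow> idem (inv x \<odot> x)"
  using idem_mul_inv[of "inv x"] by simp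

lemma idem_commute: "idem e \<Longrightarrow> idem f \<Longrightarrow> e \<odot> f = f \<odot> e"
  using mul_inv_commute[of e f] inv_idem[of e] inv_idem[of f] by (simp add: idem_def del: assoc)

lemma idem_mul: assumes e: "idem e" and f: "idem f" shows "idem (e \<odot> f)"
proof -
  have G: "e \<in> G" "f \<in> G" using e f by (auto simp: idem_def)
  have "e \<odot> f \<odot> (e \<odot> f) = e \<odot> (f \<odot> e) \<odot> f" using G by simp
  also have "\<dots> = e \<odot> (e \<odot> f) \<odot> f" using idem_commute[OF f e] by simp
  also have "\<dots> = e \<odot> f" using e f G by (simp add: idem_left idemD)
  finally show ?thesis using G by (simp add: idem_def)
qed

lemma idem_mprod: "\<forall>e\<in>set es. idem e \<Longrightarrow> idem (mprod es)"
  by (induction es) (auto simp: idem_mul, simp add: idem_def)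

lemma idem_mprod_absorb:
  assumes "\<forall>e\<in>set es. idem e" and "e \<in> set es"
  shows "mprod es \<odot> e = mprod es"
  using assms
proof (induction es)
  case (Cons a es)
  have a: "idem a" and es: "\<forall>e\<in>set es. idem e" using Cons.prems by auto
  have P: "idem (mprod es)" by (rule idem_mprod[OF es])
  have G: "a \<in> G" "mprod es \<in> G" "e \<in> G" using a P Cons.prems by (auto simp: idem_def)
  show ?case
  proof (cases "e = a")
    case True
    have "a \<odot> mprod es \<odot> a = a \<odot> (a \<odot> mprod es)" using idem_commute[OF P a] G by simp
    then show ?thesis using True idem_left[OF a] G by simp
  next
    case False
    then show ?thesis using Cons G es by simp
  qed
qed simp

text \<open>The main argument manipulates equations \<open>r \<odot> w = r\<close> with \<open>r\<close> idempotent (the cell label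
  absorbing \<open>w\<close>).\<close>

lemma stab_range:
  assumes r: "idem r" and w: "w \<in> G" and h: "r \<odot> w = r"
  shows "r \<odot> (w \<odot> inv w) = r"
proof -
  have rG: "r \<in> G" using r by (simp add: idem_def)
  have h': "inv w \<odot> r = r"
    using inv_mul_distrib[of r w] h inv_idem[OF r] rG w by simp
  have "r = (r \<odot> w) \<odot> (inv w \<odot> r)" using h h' idemD[OF r] by simp
  also have "\<dots> = r \<odot> ((w \<odot> inv w) \<odot> r)" using rG w by simp
  also have "\<dots> = r \<odot> (w \<odot> inv w)"
    using idem_commute[OF idem_mul_inv[OF w] r] idem_left[OF r] w by simp
  finally show ?thesis by simp
qed

lemma stab_range_mul:
  assumes r: "idem r" and G: "u \<in> G" "v \<in> G" and h: "r \<odot> ((u \<odot> v) \<odot> inv (u \<odot> v)) = r"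
  shows "r \<odot> (u \<odot> (v \<odot> inv v)) = r \<odot> u"
proof -
  have rG: "r \<in> G" using r by (simp add: idem_def)
  have h': "r \<odot> (u \<odot> (v \<odot> (inv v \<odot> inv u))) = r" using h G rG by (simp add: inv_mul_distrib)
  have c: "v \<odot> (inv v \<odot> (inv u \<odot> u)) = inv u \<odot> (u \<odot> (v \<odot> inv v))"
    using idem_commute[OF idem_mul_inv[of v] idem_inv_mul[of u]] G by simp
  have "r \<odot> u = (r \<odot> (u \<odot> (v \<odot> (inv v \<odot> inv u)))) \<odot> u" using h' by simp
  also have "\<dots> = r \<odot> (u \<odot> (v \<odot> (inv v \<odot> (inv u \<odot> u))))" using G rG by simp
  also have "\<dots> = r \<odot> (u \<odot> (v \<odot> inv v))" using c G by simp
  finally show ?thesis by simp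
qed

lemma stab_range_prefix:
  assumes r: "idem r" and G: "u \<in> G" "v \<in> G" and h: "r \<odot> ((u \<odot> v) \<odot> inv (u \<odot> v)) = r"
  shows "r \<odot> (u \<odot> inv u) = r"
proof -
  have rG: "r \<in> G" using r by (simp add: idem_def)
  have "r \<odot> (u \<odot> inv u) = (r \<odot> (u \<odot> (v \<odot> inv v))) \<odot> inv u"
    using stab_range_mul[OF r G h] G rG by simp
  also have "\<dots> = r" using h G rG by (simp add: inv_mul_distrib)
  finally show ?thesis .
qed

lemma stab_mul_eq_inv:
  assumes r: "idem r" and G: "u \<in> G" "v \<in> G" and h: "r \<odot> (u \<odot> v) = r"
  shows "r \<odot> u = r \<odot> inv v"
proof -
  have rG: "r \<in> G" using r by (simp add: idem_def)
  have "r \<odot> u = r \<odot> (u \<odot> (v \<odot> inv v))"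
    using stab_range_mul[OF r G stab_range[OF r _ h]] G by simp
  also have "\<dots> = r \<odot> inv v" using h G rG by (simp del: assoc add: assoc_left)
  finally show ?thesis .
qed

lemma stab_range_transfer:
  assumes r: "idem r" and G: "y \<in> G" "z \<in> G" and h: "r \<odot> (y \<odot> inv y) = r" and e: "r \<odot> y = r \<odot> z"
  shows "r \<odot> (z \<odot> inv z) = r"
proof -
  have rG: "r \<in> G" using r by (simp add: idem_def)
  have range: "(r \<odot> x) \<odot> inv (r \<odot> x) = r \<odot> (x \<odot> inv x)" if "x \<in> G" for x
  proof -
    have "(r \<odot> x) \<odot> inv (r \<odot> x) = r \<odot> ((x \<odot> inv x) \<odot> r)"
      using that rG inv_idem[OF r] by (simp add: inv_mul_distrib)
    also have "\<dots> = r \<odot> (x \<odot> inv x)"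
      using idem_commute[OF idem_mul_inv[OF that] r] idem_left[OF r] that by simp
    finally show ?thesis .
  qed
  show ?thesis using range[OF G(1)] range[OF G(2)] e h by simp
qed

lemma stab_idem_prefix:
  assumes r: "idem r" and P: "idem P" and t: "t \<in> G" and h: "r \<odot> (P \<odot> t) = r"
  shows "r \<odot> P = r"
proof -
  have G: "r \<in> G" "P \<in> G" using r P by (auto simp: idem_def)
  have "r \<odot> (P \<odot> inv P) = r"
    by (rule stab_range_prefix[OF r G(2) t stab_range[OF r _ h]]) (use G t in simp)
  then show ?thesis using inv_idem[OF P] idemD[OF P] by simp
qed

end

section \<open>Labelled simplices\<close>

lemma sorted_list_of_set_ConsD:
  assumes "sorted_list_of_set V = a # xs"
  shows "finite V" and "a = Min V" and "sorted_list_of_set (V - {a}) = xs"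
proof -
  show fin: "finite V"
    using assms by (metis list.distinct(1) sorted_list_of_set.fold_insort_key.infinite)
  then have "V \<noteq> {}" using assms by auto
  then show "a = Min V" "sorted_list_of_set (V - {a}) = xs"
    using sorted_list_of_set_nonempty[OF fin] assms by auto
qed

lemma sorted_list_of_set_card_three:
  assumes "card V = 3"
  obtains a b c where "sorted_list_of_set V = [a, b, c]"
proof -
  have "length (sorted_list_of_set V) = 3" using assms by simp
  then show ?thesis using that by (metis length_0_conv length_Suc_conv numeral_3_eq_3)
qed

lemma sorted_list_of_set_eq_three:
  assumes "sorted_list_of_set V = [a, b, c]"
  shows "V = {a, b, c}" "a < b" "b < c"
proof -
  have "V = set [a, b, c]" using set_sorted_list_of_set[OF sorted_list_of_set_ConsD(1)[OF assms]] assms by simp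
  then show "V = {a, b, c}" by simp
  show "a < b" "b < c" using strict_sorted_list_of_set[of V] assms by auto
qed

lemma sorted_list_of_set_two_smallest:
  assumes "2 \<le> card V"
  obtains a0 a1 vs where "sorted_list_of_set V = a0 # a1 # vs" "length vs + 2 = card V"
proof -
  have "2 \<le> length (sorted_list_of_set V)" using assms by simp
  then obtain a0 a1 vs where "sorted_list_of_set V = a0 # a1 # vs"
    by (cases "sorted_list_of_set V"; cases "tl (sorted_list_of_set V)") auto
  moreover have "length (sorted_list_of_set V) = card V" by simp
  ultimately show ?thesis using that by simp
qed

lemma card_two_ordered:
  fixes F :: "nat set"
  assumes "card F = 2"
  obtains a b where "F = {a, b}" "a < b"
  using assms by (metis card_2_iff linorder_neqE_nat insert_commute)

lemma exists_outside:
  assumes "finite S" "card S < card V"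
  obtains v where "v \<in> V" "v \<notin> S"
  using assms by (metis card_mono not_le subsetI)

lemma successively_if_nth:
  "(\<forall>i. Suc i < length xs \<longrightarrow> P (xs ! i) (xs ! Suc i)) \<Longrightarrow> successively P xs"
proof (induction P xs rule: successively.induct)
  case (3 P x y xs)
  then show ?case by force
qed simp_all

lemma map_nth_Cons_upt: "map (\<lambda>i. (x # xs) ! i) [1..<Suc (length xs)] = xs"
proof -
  have "[1..<Suc (length xs)] = map Suc [0..<length xs]" by (simp add: map_Suc_upt)
  then show ?thesis by (simp add: comp_def map_nth)
qed

definition boundary_step :: "nat set \<Rightarrow> nat set \<times> bool \<Rightarrow> bool" where
  "boundary_step V s \<longleftrightarrow> (case s of (F, iv) \<Rightarrow>
     F \<subseteq> V \<and> F \<noteq> V \<and> 2 \<le> card F \<and> (iv \<longrightarrow> card F = 2))"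

text \<open>\<open>X F\<close> is the label of the face spanned by the vertex set \<open>F\<close> of a simplex with vertex set
  \<open>Vtx\<close>; the two relations are \<open>\<rho> = \<rho> bl(\<rho>)\<close> for the faces of dimension \<open>2\<close> and \<open>\<ge> 3\<close>,
  with the faces of \<open>\<rho>\<close> read off through \<open>X\<close>.\<close>

locale simplex_labelling = inverse_monoid +
  fixes Vtx :: "nat set" and X :: "nat set \<Rightarrow> 'a"
  assumes label_closed: "F \<subseteq> Vtx \<Longrightarrow> 2 \<le> card F \<Longrightarrow> X F \<in> G"
    and label_idem: "F \<subseteq> Vtx \<Longrightarrow> 3 \<le> card F \<Longrightarrow> idem (X F)"
    and triangle_relation: "F \<subseteq> Vtx \<Longrightarrow> sorted_list_of_set F = [a, b, c] \<Longrightarrow>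
       X F = X F \<odot> X {a, b} \<odot> X {b, c} \<odot> inv (X {a, c})"
    and cell_relation: "F \<subseteq> Vtx \<Longrightarrow> sorted_list_of_set F = a0 # a1 # vs \<Longrightarrow> 2 \<le> length vs \<Longrightarrow>
       X F = X F \<odot> mprod (map (\<lambda>v. X (F - {v})) (rev (a1 # vs))) \<odot> X {a0, a1} \<odot> X (F - {a0})
         \<odot> inv (X {a0, a1})"
begin

lemma label_closed_pair: "{a, b} \<subseteq> Vtx \<Longrightarrow> a \<noteq> b \<Longrightarrow> X {a, b} \<in> G"
  by (rule label_closed) auto

definition spoke :: "nat set \<Rightarrow> nat \<Rightarrow> 'a" where
  "spoke V a = (if a = Min V then one else X {Min V, a})"

lemma spoke_closed: "V \<subseteq> Vtx \<Longrightarrow> finite V \<Longrightarrow> a \<in> V \<Longrightarrow> spoke V a \<in> G"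
proof -
  assume V: "V \<subseteq> Vtx" "finite V" "a \<in> V"
  then have "Min V \<in> Vtx" using Min_in[OF V(2)] by blast
  then show ?thesis using V by (auto simp: spoke_def intro!: label_closed_pair)
qed

text \<open>With \<open>X V\<close> on the left: an edge of \<open>V\<close> read at the end of the spoke to its first vertex
  can be replaced by the spoke to its last vertex; \<open>X V\<close> absorbs the range of every spoke; and a
  proper face of dimension \<open>\<ge> 2\<close> (a loop at its root in a generalized path) read at the end of the
  spoke to its root disappears.\<close>

definition boundary_identities :: "nat set \<Rightarrow> bool" where
  "boundary_identities V \<longleftrightarrow>
     (\<forall>a\<in>V. \<forall>b\<in>V. a < b \<longrightarrow> X V \<odot> (spoke V a \<odot> X {a, b}) = X V \<odot> spoke V b) \<and>
     (\<forall>a\<in>V. X V \<odot> (spoke V a \<odot> inv (spoke V a)) = X V) \<and>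
     (\<forall>F. F \<subseteq> V \<and> F \<noteq> V \<and> 3 \<le> card F \<longrightarrow>
        X V \<odot> (spoke V (Min F) \<odot> X F) = X V \<odot> spoke V (Min F))"

lemma boundary_identitiesD:
  assumes "boundary_identities V"
  shows "a \<in> V \<Longrightarrow> b \<in> V \<Longrightarrow> a < b \<Longrightarrow> X V \<odot> (spoke V a \<odot> X {a, b}) = X V \<odot> spoke V b"
    and "a \<in> V \<Longrightarrow> X V \<odot> (spoke V a \<odot> inv (spoke V a)) = X V"
    and "F \<subseteq> V \<Longrightarrow> F \<noteq> V \<Longrightarrow> 3 \<le> card F \<Longrightarrow>
      X V \<odot> (spoke V (Min F) \<odot> X F) = X V \<odot> spoke V (Min F)"
  using assms unfolding boundary_identities_def by blast+

lemma boundary_identities_triangle: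
  assumes F: "F \<subseteq> Vtx" and l: "sorted_list_of_set F = [a, b, c]"
  shows "boundary_identities F"
proof -
  note F_eq = sorted_list_of_set_eq_three(1)[OF l]
    and ab = sorted_list_of_set_eq_three(2)[OF l] and bc = sorted_list_of_set_eq_three(3)[OF l]
  have V: "{a, b, c} \<subseteq> Vtx" using F F_eq by simp
  define r where "r = X {a, b, c}"
  have G: "X {a, b} \<in> G" "X {b, c} \<in> G" "X {a, c} \<in> G"
    using label_closed_pair V ab bc by auto
  have r: "idem r" unfolding r_def using label_idem V ab bc by simp
  have rG: "r \<in> G" using idemD(1)[OF r] .
  have rel: "r \<odot> ((X {a, b} \<odot> X {b, c}) \<odot> inv (X {a, c})) = r"
    using triangle_relation[OF F l] G rG by (simp add: r_def F_eq)
  have range: "r \<odot> ((X {a, b} \<odot> X {b, c} \<odot> inv (X {a, c})) \<odot> inv (X {a, b} \<odot> X {b, c} \<odot> inv (X {a, c}))) = r"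
    using stab_range[OF r _ rel] G by simp
  have ab_bc: "r \<odot> (X {a, b} \<odot> X {b, c}) = r \<odot> X {a, c}"
    using stab_mul_eq_inv[OF r _ _ rel] G by simp
  have range_ab: "r \<odot> (X {a, b} \<odot> inv (X {a, b})) = r"
    using stab_range_prefix[OF r G(1), of "X {b, c} \<odot> inv (X {a, c})"] range G rG by simp
  have range_ab_bc: "r \<odot> ((X {a, b} \<odot> X {b, c}) \<odot> inv (X {a, b} \<odot> X {b, c})) = r"
    using stab_range_prefix[OF r _ _, of "X {a, b} \<odot> X {b, c}" "inv (X {a, c})"] range G rG by simp
  have range_ac: "r \<odot> (X {a, c} \<odot> inv (X {a, c})) = r"
    using stab_range_transfer[OF r _ _ range_ab_bc ab_bc] G by simp
  have "Min {a, b, c} = a" using ab bc by (simp add: min_def)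
  then have spoke: "spoke {a, b, c} a = one" "spoke {a, b, c} b = X {a, b}" "spoke {a, b, c} c = X {a, c}"
    using ab bc by (auto simp: spoke_def)
  have no_proper: "\<not> (F \<subseteq> {a, b, c} \<and> F \<noteq> {a, b, c} \<and> 3 \<le> card F)" for F
    using ab bc card_seteq[of "{a, b, c}" F] by auto
  show ?thesis
    unfolding F_eq boundary_identities_def r_def[symmetric]
    using spoke G rG ab bc ab_bc range_ab range_ac no_proper by auto
qed

lemma facet_idem: "V \<subseteq> Vtx \<Longrightarrow> 4 \<le> card V \<Longrightarrow> v \<in> V \<Longrightarrow> idem (X (V - {v}))"
  by (rule label_idem) (auto simp: card_Diff_singleton)

lemma facet_closed: "V \<subseteq> Vtx \<Longrightarrow> 3 \<le> card V \<Longrightarrow> v \<in> V \<Longrightarrow> X (V - {v}) \<in> G"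
  by (rule label_closed) (auto simp: card_Diff_singleton)

lemma cell_facts:
  assumes V: "V \<subseteq> Vtx" and l: "sorted_list_of_set V = a0 # a1 # vs" and vs: "2 \<le> length vs"
  shows "finite V" "Min V = a0" "Min (V - {a0}) = a1" "a0 < a1" "a0 \<in> V" "a1 \<in> V"
    and "set vs \<subseteq> V" "card V = length vs + 2" "idem (X V)"
    and "X {a0, a1} \<in> G" "X (V - {a0}) \<in> G"
proof -
  show fin: "finite V" "Min V = a0" using sorted_list_of_set_ConsD[OF l] by simp_all
  show "Min (V - {a0}) = a1"
    using sorted_list_of_set_ConsD(2)[OF sorted_list_of_set_ConsD(3)[OF l]] by simp
  show "a0 < a1" using strict_sorted_list_of_set[of V] l by simp
  have set: "set (a0 # a1 # vs) = V" using set_sorted_list_of_set[OF fin(1)] l by simp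
  then show "a0 \<in> V" "a1 \<in> V" "set vs \<subseteq> V" by auto
  show card: "card V = length vs + 2" using length_sorted_list_of_set[of V] l by simp
  then show "idem (X V)" using label_idem V vs by simp
  show "X {a0, a1} \<in> G" using label_closed_pair V set \<open>a0 < a1\<close> by auto
  show "X (V - {a0}) \<in> G" using facet_closed V card vs \<open>a0 \<in> V\<close> by simp
qed

lemma cell_absorbs_facet_product:
  assumes V: "V \<subseteq> Vtx" and l: "sorted_list_of_set V = a0 # a1 # vs" and vs: "2 \<le> length vs"
  shows "X V \<odot> mprod (map (\<lambda>v. X (V - {v})) (rev (a1 # vs))) = X V"
proof -
  note facts = cell_facts[OF V l vs]
  define P where "P = mprod (map (\<lambda>v. X (V - {v})) (rev (a1 # vs)))"
  define t where "t = X {a0, a1} \<odot> X (V - {a0}) \<odot> inv (X {a0, a1})"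
  have "\<forall>e\<in>set (map (\<lambda>v. X (V - {v})) (rev (a1 # vs))). idem e"
    using facet_idem[OF V] facts vs by auto
  then have P: "idem P" unfolding P_def by (rule idem_mprod)
  have G: "X V \<in> G" "P \<in> G" "t \<in> G" using facts idemD(1)[OF P] idemD(1)[OF facts(9)] by (simp_all add: t_def)
  have "X V \<odot> (P \<odot> t) = X V \<odot> P \<odot> X {a0, a1} \<odot> X (V - {a0}) \<odot> inv (X {a0, a1})"
    using G facts by (simp add: t_def)
  also have "\<dots> = X V" unfolding P_def by (rule cell_relation[OF V l vs, symmetric])
  finally have "X V \<odot> (P \<odot> t) = X V" .
  then show ?thesis using stab_idem_prefix[OF facts(9) P G(3)] by (simp add: P_def)
qed

lemma cell_absorbs_facet:
  assumes V: "V \<subseteq> Vtx" "4 \<le> card V" and v: "v \<in> V" "v \<noteq> Min V"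
  shows "X V \<odot> X (V - {v}) = X V"
proof -
  have "2 \<le> card V" using V(2) by simp
  then obtain a0 a1 vs where l: "sorted_list_of_set V = a0 # a1 # vs" and len: "length vs + 2 = card V"
    by (rule sorted_list_of_set_two_smallest)
  have vs: "2 \<le> length vs" using len V(2) by simp
  note facts = cell_facts[OF V(1) l vs]
  define facets where "facets = map (\<lambda>v. X (V - {v})) (rev (a1 # vs))"
  have all_idem: "\<forall>e\<in>set facets. idem e"
    using facet_idem V facts by (auto simp: facets_def)
  have "v \<in> set (a1 # vs)"
    using v facts(2) set_sorted_list_of_set[OF facts(1)] l by auto
  then have mem: "X (V - {v}) \<in> set facets" by (auto simp: facets_def)
  have G: "mprod facets \<in> G" "X (V - {v}) \<in> G" "X V \<in> G"
    using all_idem mem idemD(1)[OF facts(9)] by (auto simp: idemD(1) idem_mprod)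
  have "X V \<odot> X (V - {v}) = X V \<odot> (mprod facets \<odot> X (V - {v}))"
    using cell_absorbs_facet_product[OF V(1) l vs, folded facets_def] G
    by (metis assoc)
  also have "\<dots> = X V"
    using idem_mprod_absorb[OF all_idem mem] cell_absorbs_facet_product[OF V(1) l vs, folded facets_def]
    by simp
  finally show ?thesis .
qed

lemma cell_opposite_facet:
  assumes V: "V \<subseteq> Vtx" and l: "sorted_list_of_set V = a0 # a1 # vs" and vs: "2 \<le> length vs"
  shows "X V \<odot> (X {a0, a1} \<odot> X (V - {a0})) = X V \<odot> X {a0, a1}"
proof -
  note facts = cell_facts[OF V l vs]
  define P where "P = mprod (map (\<lambda>v. X (V - {v})) (rev (a1 # vs)))"
  have "\<forall>e\<in>set (map (\<lambda>v. X (V - {v})) (rev (a1 # vs))). idem e"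
    using facet_idem[OF V] facts vs by auto
  then have PG: "P \<in> G" unfolding P_def by (intro idemD(1) idem_mprod)
  have G: "X V \<in> G" "X {a0, a1} \<in> G" "X (V - {a0}) \<in> G" using facts idemD(1) by auto
  have "X V \<odot> ((X {a0, a1} \<odot> X (V - {a0})) \<odot> inv (X {a0, a1}))
      = (X V \<odot> P) \<odot> ((X {a0, a1} \<odot> X (V - {a0})) \<odot> inv (X {a0, a1}))"
    using cell_absorbs_facet_product[OF V l vs] by (simp add: P_def)
  also have "\<dots> = X V \<odot> P \<odot> X {a0, a1} \<odot> X (V - {a0}) \<odot> inv (X {a0, a1})"
    using G PG by simp
  also have "\<dots> = X V" unfolding P_def by (rule cell_relation[OF V l vs, symmetric])
  finally show ?thesis
    using stab_mul_eq_inv[OF facts(9), of "X {a0, a1} \<odot> X (V - {a0})" "inv (X {a0, a1})"] G by simp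
qed

lemma spoke_facet:
  assumes "finite V" "v \<in> V" "v \<noteq> Min V"
  shows "spoke (V - {v}) = spoke V"
proof -
  have "Min V \<in> V" using Min_in[OF assms(1)] assms(2) by blast
  then have "Min (V - {v}) = Min V"
    using assms Min_le[OF assms(1)] by (intro Min_eqI) auto
  then show ?thesis by (simp add: spoke_def fun_eq_iff)
qed

lemma facet_stab_lift:
  assumes V: "V \<subseteq> Vtx" "4 \<le> card V" and v: "v \<in> V" "v \<noteq> Min V"
    and yz: "y \<in> G" "z \<in> G" and eq: "X (V - {v}) \<odot> y = X (V - {v}) \<odot> z"
  shows "X V \<odot> y = X V \<odot> z"
proof (rule left_mul_eq_lift[OF cell_absorbs_facet[OF V v] _ _ yz eq])
  show "X V \<in> G" using label_closed V by simp
  show "X (V - {v}) \<in> G" using facet_closed[OF V(1) _ v(1)] V(2) by simp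
qed

lemma boundary_identities_lift:
  assumes V: "V \<subseteq> Vtx" "4 \<le> card V" and v: "v \<in> V" "v \<noteq> Min V"
    and facet: "boundary_identities (V - {v})"
  shows "a \<in> V - {v} \<Longrightarrow> b \<in> V - {v} \<Longrightarrow> a < b \<Longrightarrow>
      X V \<odot> (spoke V a \<odot> X {a, b}) = X V \<odot> spoke V b"
    and "a \<in> V - {v} \<Longrightarrow> X V \<odot> (spoke V a \<odot> inv (spoke V a)) = X V"
    and "F \<subseteq> V - {v} \<Longrightarrow> F \<noteq> V - {v} \<Longrightarrow> 3 \<le> card F \<Longrightarrow>
      X V \<odot> (spoke V (Min F) \<odot> X F) = X V \<odot> spoke V (Min F)"
proof -
  have fin: "finite V" using V(2) by (simp add: card_ge_0_finite)
  have spoke: "spoke (V - {v}) = spoke V" using spoke_facet[OF fin v] .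
  have gG: "spoke V a \<in> G" if "a \<in> V" for a using spoke_closed[OF V(1) fin that] .
  have facetG: "X (V - {v}) \<in> G" using facet_closed[OF V(1) _ v(1)] V(2) by simp
  note lift = facet_stab_lift[OF V v]
  show "X V \<odot> (spoke V a \<odot> X {a, b}) = X V \<odot> spoke V b"
    if ab: "a \<in> V - {v}" "b \<in> V - {v}" "a < b"
  proof (rule lift)
    have "{a, b} \<subseteq> Vtx" using ab V(1) by auto
    then show "spoke V a \<odot> X {a, b} \<in> G" "spoke V b \<in> G"
      using gG ab label_closed_pair[of a b] by auto
  qed (use boundary_identitiesD(1)[OF facet ab] spoke in simp)
  show "X V \<odot> (spoke V a \<odot> inv (spoke V a)) = X V" if a: "a \<in> V - {v}"
  proof -
    have "X V \<odot> (spoke V a \<odot> inv (spoke V a)) = X V \<odot> one"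
      by (rule lift) (use gG a boundary_identitiesD(2)[OF facet a] spoke facetG in simp_all)
    then show ?thesis using label_closed V by simp
  qed
  show "X V \<odot> (spoke V (Min F) \<odot> X F) = X V \<odot> spoke V (Min F)"
    if F: "F \<subseteq> V - {v}" "F \<noteq> V - {v}" "3 \<le> card F"
  proof (rule lift)
    have "finite F" "F \<noteq> {}" using F by (auto simp: card_ge_0_finite)
    then have "Min F \<in> V" using Min_in F(1) by blast
    moreover have "X F \<in> G" using F(1,3) V(1) by (intro label_closed) auto
    ultimately show "spoke V (Min F) \<odot> X F \<in> G" "spoke V (Min F) \<in> G" using gG by auto
  qed (use boundary_identitiesD(3)[OF facet F] spoke in simp)
qed

text \<open>Each identity of \<open>boundary_identities V\<close> involves at most three vertices or lies in a proper
  face of \<open>V\<close>; unless that face is the facet opposite \<open>Min V\<close>, it misses some vertex \<open>v \<noteq> Min V\<close>,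
  holds in \<open>V - {v}\<close> by induction, and lifts to \<open>V\<close> because \<open>X V\<close> absorbs \<open>X (V - {v})\<close>.\<close>

lemma boundary_identities_step:
  assumes V: "V \<subseteq> Vtx" "4 \<le> card V"
    and IH: "\<And>v. v \<in> V \<Longrightarrow> v \<noteq> Min V \<Longrightarrow> boundary_identities (V - {v})"
  shows "boundary_identities V"
proof -
  have "2 \<le> card V" using V(2) by simp
  then obtain a0 a1 vs where l: "sorted_list_of_set V = a0 # a1 # vs" and len: "length vs + 2 = card V"
    by (rule sorted_list_of_set_two_smallest)
  have vs: "2 \<le> length vs" using len V(2) by simp
  note facts = cell_facts[OF V(1) l vs]
  note lift = boundary_identities_lift[OF V _ _ IH, unfolded facts(2)]
  have avoid: "\<exists>v\<in>V. v \<notin> {a0, a, b}" for a b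
  proof -
    have "card {a0, a, b} < card V" using V(2) card_insert_le_m1 by (auto simp: card_insert_if)
    then show ?thesis using exists_outside[of "{a0, a, b}" V] by blast
  qed
  have E: "X V \<odot> (spoke V a \<odot> X {a, b}) = X V \<odot> spoke V b" if "a \<in> V" "b \<in> V" "a < b" for a b
  proof -
    obtain v where "v \<in> V" "v \<notin> {a0, a, b}" using avoid by blast
    then show ?thesis using lift(1)[of v a b] that by auto
  qed
  have R: "X V \<odot> (spoke V a \<odot> inv (spoke V a)) = X V" if "a \<in> V" for a
  proof -
    obtain v where "v \<in> V" "v \<notin> {a0, a, a}" using avoid by blast
    then show ?thesis using lift(2)[of v a] that by auto
  qed
  have F: "X V \<odot> (spoke V (Min F) \<odot> X F) = X V \<odot> spoke V (Min F)"
    if F: "F \<subseteq> V" "F \<noteq> V" "3 \<le> card F" for F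
  proof (cases "\<exists>v\<in>V - F. v \<noteq> a0")
    case True
    then obtain v where v: "v \<in> V" "v \<notin> F" "v \<noteq> a0" by blast
    show ?thesis
    proof (cases "F = V - {v}")
      case True
      then have "Min F = a0"
        using v facts(1,2,5) Min_le[OF facts(1)] by (auto intro!: Min_eqI)
      then show ?thesis
        using cell_absorbs_facet[OF V v(1)] v(3) True label_closed[OF V(1)] V(2) facet_closed[OF V(1) _ v(1)] facts(2)
        by (simp add: spoke_def)
    next
      case False
      then show ?thesis using lift(3)[OF v(1,3), of F] F v by auto
    qed
  next
    case False
    then have "V - F \<subseteq> {a0}" by blast
    moreover have "V - F \<noteq> {}" using F(1,2) by blast
    ultimately have "F = V - {a0}" using F(1) by blast
    then have "Min F = a1" "spoke V a1 = X {a0, a1}"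
      using facts(2,3,4) by (auto simp: spoke_def)
    then show ?thesis
      using cell_opposite_facet[OF V(1) l vs] \<open>F = V - {a0}\<close> by simp
  qed
  show ?thesis unfolding boundary_identities_def using E R F by blast
qed

lemma boundary_identities_cell:
  "V \<subseteq> Vtx \<Longrightarrow> 3 \<le> card V \<Longrightarrow> boundary_identities V"
proof (induction "card V" arbitrary: V rule: less_induct)
  case less
  have fin: "finite V" using less.prems(2) by (simp add: card_ge_0_finite)
  show ?case
  proof (cases "card V = 3")
    case True
    then obtain a b c where "sorted_list_of_set V = [a, b, c]"
      by (rule sorted_list_of_set_card_three)
    then show ?thesis using boundary_identities_triangle less.prems(1) by simp
  next
    case False
    show ?thesis
    proof (rule boundary_identities_step[OF less.prems(1)])
      show "4 \<le> card V" using False less.prems(2) by simp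
      fix v assume "v \<in> V" "v \<noteq> Min V"
      then show "boundary_identities (V - {v})"
        using less fin False by (intro less.hyps) (auto simp: card_Diff_singleton)
    qed
  qed
qed

definition step_label :: "nat set \<times> bool \<Rightarrow> 'a" where
  "step_label s = (if snd s then inv (X (fst s)) else X (fst s))"

lemma step_label_closed: "V \<subseteq> Vtx \<Longrightarrow> boundary_step V s \<Longrightarrow> step_label s \<in> G"
  using label_closed by (cases s) (auto simp: boundary_step_def step_label_def)

lemma boundary_step_stab:
  assumes V: "V \<subseteq> Vtx" "3 \<le> card V" and s: "boundary_step V s"
  shows "X V \<odot> (spoke V (st_alpha s) \<odot> step_label s) = X V \<odot> spoke V (st_omega s)"
proof -
  obtain F iv where sF: "s = (F, iv)" by (cases s)
  have F: "F \<subseteq> V" "F \<noteq> V" "2 \<le> card F" "iv \<Longrightarrow> card F = 2"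
    using s by (auto simp: boundary_step_def sF)
  have fin: "finite V" using V(2) by (simp add: card_ge_0_finite)
  have ids: "boundary_identities V" using boundary_identities_cell[OF V] .
  have rI: "idem (X V)" using label_idem V by simp
  have gG: "spoke V a \<in> G" if "a \<in> V" for a using spoke_closed[OF V(1) fin that] .
  show ?thesis
  proof (cases "card F = 2")
    case True
    then obtain a b where ab: "F = {a, b}" "a < b" by (rule card_two_ordered)
    have abV: "a \<in> V" "b \<in> V" using F(1) ab by auto
    have XG: "X {a, b} \<in> G" using label_closed_pair V(1) abV ab by auto
    have fwd: "X V \<odot> (spoke V a \<odot> X {a, b}) = X V \<odot> spoke V b"
      using boundary_identitiesD(1)[OF ids abV ab(2)] .
    have ends: "st_alpha s = (if iv then b else a)" "st_omega s = (if iv then a else b)"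
      using ab True by (auto simp: sF st_alpha_def st_omega_def max_def min_def)
    show ?thesis
    proof (cases iv)
      case False
      then show ?thesis using fwd ends by (simp add: sF step_label_def ab)
    next
      case True
      txt \<open>\<open>X V\<close> absorbs the range of \<open>spoke V b\<close>, hence that of \<open>spoke V a \<odot> X {a, b}\<close>,
        which lets \<open>X {a, b}\<close> be cancelled on the right.\<close>
      have range: "X V \<odot> ((spoke V a \<odot> X {a, b}) \<odot> inv (spoke V a \<odot> X {a, b})) = X V"
        using stab_range_transfer[OF rI gG[OF abV(2)] _ boundary_identitiesD(2)[OF ids abV(2)]
            fwd[symmetric]] gG[OF abV(1)] XG by simp
      have backward: "X V \<odot> (spoke V a \<odot> (X {a, b} \<odot> inv (X {a, b}))) = X V \<odot> spoke V a"
        using stab_range_mul[OF rI gG[OF abV(1)] XG range] .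
      have "X V \<odot> (spoke V b \<odot> inv (X {a, b})) = (X V \<odot> spoke V b) \<odot> inv (X {a, b})"
        using idemD(1)[OF rI] gG abV XG by simp
      also have "\<dots> = X V \<odot> spoke V a"
        using fwd[symmetric] backward idemD(1)[OF rI] gG abV XG by simp
      finally show ?thesis using True ends by (simp add: sF step_label_def ab)
    qed
  next
    case False
    then have "3 \<le> card F" "\<not> iv" using F by auto
    then show ?thesis
      using boundary_identitiesD(3)[OF ids F(1,2)] False
      by (simp add: sF st_alpha_def st_omega_def step_label_def)
  qed
qed

lemma boundary_path_stab:
  assumes V: "V \<subseteq> Vtx" "3 \<le> card V"
  shows "\<forall>s\<in>set q. boundary_step V s \<Longrightarrow> successively (\<lambda>s t. st_omega s = st_alpha t) q \<Longrightarrow>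
    q \<noteq> [] \<Longrightarrow>
    X V \<odot> (spoke V (st_alpha (hd q)) \<odot> mprod (map step_label q)) = X V \<odot> spoke V (st_omega (last q))"
proof (induction q)
  case (Cons s q)
  have fin: "finite V" using V(2) by (simp add: card_ge_0_finite)
  have in_V: "st_alpha t \<in> V" "st_omega t \<in> V" "step_label t \<in> G" if "boundary_step V t" for t
  proof -
    obtain F iv where t: "t = (F, iv)" by (cases t)
    then have F: "F \<subseteq> V" "2 \<le> card F" using that by (auto simp: boundary_step_def)
    then have "finite F" "F \<noteq> {}" using fin finite_subset by auto
    then have "Min F \<in> V" "Max F \<in> V" using Min_in Max_in F(1) by blast+
    then show "st_alpha t \<in> V" "st_omega t \<in> V"
      by (auto simp: st_alpha_def st_omega_def t)
    show "step_label t \<in> G" using step_label_closed[OF V(1) that] .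
  qed
  have s: "boundary_step V s" using Cons.prems(1) by simp
  have step: "X V \<odot> (spoke V (st_alpha s) \<odot> step_label s) = X V \<odot> spoke V (st_omega s)"
    using boundary_step_stab[OF V s] .
  show ?case
  proof (cases "q = []")
    case True
    then show ?thesis using step in_V[OF s] by simp
  next
    case False
    have IH: "X V \<odot> (spoke V (st_omega s) \<odot> mprod (map step_label q)) = X V \<odot> spoke V (st_omega (last q))"
      using Cons False by (simp add: successively_Cons)
    have G: "X V \<in> G" "spoke V (st_alpha s) \<in> G" "step_label s \<in> G" "mprod (map step_label q) \<in> G"
      using label_closed V in_V[OF s] spoke_closed[OF V(1) fin] Cons.prems(1)
        step_label_closed[OF V(1)] by (auto intro!: mprod_closed)
    have "X V \<odot> (spoke V (st_alpha s) \<odot> mprod (map step_label (s # q)))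
        = (X V \<odot> (spoke V (st_alpha s) \<odot> step_label s)) \<odot> mprod (map step_label q)"
      using G by simp
    also have "\<dots> = X V \<odot> (spoke V (st_omega s) \<odot> mprod (map step_label q))"
      using step G spoke_closed[OF V(1) fin in_V(2)[OF s]] by simp
    finally show ?thesis using IH False by simp
  qed
qed simp

theorem closed_boundary_path_stab:
  assumes V: "V \<subseteq> Vtx" "3 \<le> card V"
    and q: "\<forall>s\<in>set q. boundary_step V s" "successively (\<lambda>s t. st_omega s = st_alpha t) q"
    and closed: "q \<noteq> [] \<Longrightarrow> st_alpha (hd q) = Min V \<and> st_omega (last q) = Min V"
  shows "X V \<odot> mprod (map step_label q) = X V"
proof (cases "q = []")
  case False
  have G: "X V \<in> G" "mprod (map step_label q) \<in> G"
    using label_closed V step_label_closed[OF V(1)] q(1) by (auto intro!: mprod_closed)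
  then show ?thesis
    using boundary_path_stab[OF V q False] closed False by (simp add: spoke_def)
qed (use label_closed V in simp)

end

section \<open>Faces of a semi-simplicial set\<close>

definition enum :: "nat set \<Rightarrow> nat \<Rightarrow> nat" where
  "enum A i = sorted_list_of_set A ! i"

lemma enum_in: "finite A \<Longrightarrow> i < card A \<Longrightarrow> enum A i \<in> A"
  by (metis enum_def length_sorted_list_of_set nth_mem set_sorted_list_of_set)

lemma card_less_enum:
  assumes "finite A" "i < card A"
  shows "card {a\<in>A. a < enum A i} = i"
proof -
  define xs where "xs = sorted_list_of_set A"
  have sorted: "sorted_wrt (<) xs" and set: "set xs = A" and len: "length xs = card A"
    and dist: "distinct xs"
    using assms by (auto simp: xs_def)
  have "{a\<in>A. a < xs ! i} = set (take i xs)"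
  proof (intro equalityI subsetI)
    fix a assume "a \<in> set (take i xs)"
    then obtain j where "j < i" "a = xs ! j" using assms len by (auto simp: in_set_conv_nth)
    then show "a \<in> {a\<in>A. a < xs ! i}"
      using sorted_wrt_nth_less[OF sorted, of j i] assms len set by auto
  next
    fix a assume a: "a \<in> {a\<in>A. a < xs ! i}"
    then obtain j where j: "j < length xs" "a = xs ! j" using set by (auto simp: in_set_conv_nth)
    have "j < i"
    proof (rule ccontr)
      assume "\<not> j < i"
      then have "xs ! i \<le> xs ! j" using sorted_wrt_nth_less[OF sorted, of i j] j by (cases "i = j") auto
      then show False using a j by auto
    qed
    then show "a \<in> set (take i xs)" using j by (auto simp: in_set_conv_nth)
  qed
  moreover have "card (set (take i xs)) = i" using dist assms len by (simp add: distinct_card)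
  ultimately show ?thesis by (simp add: enum_def xs_def)
qed

lemma enum_eqI:
  assumes "finite A" "x \<in> A" "card {a\<in>A. a < x} = i"
  shows "enum A i = x"
proof -
  obtain j where j: "j < card A" "x = enum A j"
    using assms by (metis enum_def in_set_conv_nth length_sorted_list_of_set set_sorted_list_of_set)
  then show ?thesis using card_less_enum[OF assms(1) j(1)] assms(3) by simp
qed

lemma enum_atLeastAtMost: "i \<le> n \<Longrightarrow> enum {0..n} i = i"
proof -
  assume "i \<le> n"
  have "{0..n} = {0..<Suc n}" by auto
  then show ?thesis using \<open>i \<le> n\<close> by (simp add: enum_def del: upt_Suc)
qed

lemma enum_insert_initial:
  assumes A: "finite A" "j \<notin> A" "{0..<j} \<subseteq> A" and i: "j \<le> i" "Suc i < card (insert j A)"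
  shows "enum (insert j A) (Suc i) = enum A i" and "j < enum A i"
proof -
  define t where "t = enum (insert j A) (Suc i)"
  have t: "t \<in> insert j A" "card {a\<in>insert j A. a < t} = Suc i"
    using enum_in[of "insert j A"] card_less_enum[of "insert j A"] A(1) i(2) unfolding t_def by blast+
  have jt: "j < t"
  proof (rule ccontr)
    assume "\<not> j < t"
    then have "{a\<in>insert j A. a < t} \<subseteq> {0..<j}" by auto
    then have "card {a\<in>insert j A. a < t} \<le> j" using card_mono[of "{0..<j}"] by fastforce
    then show False using t i by simp
  qed
  have "{a\<in>insert j A. a < t} = insert j {a\<in>A. a < t}" using jt by auto
  then have "card {a\<in>A. a < t} = i" using t A by simp
  then have "enum A i = t" using enum_eqI[OF A(1)] t jt by simp
  then show "enum (insert j A) (Suc i) = enum A i" "j < enum A i" using jt by (simp_all add: t_def)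
qed

text \<open>Vertices are deleted from the highest down, so that the indices of those still to be deleted
  do not shift.\<close>

definition del_vertices :: "(nat \<Rightarrow> 'c \<Rightarrow> 'c) \<Rightarrow> 'c \<Rightarrow> nat set \<Rightarrow> 'c" where
  "del_vertices d c D = foldl (\<lambda>x j. d j x) c (rev (sorted_list_of_set D))"

lemma del_vertices_empty[simp]: "del_vertices d c {} = c"
  by (simp add: del_vertices_def)

lemma del_vertices_Min:
  "finite D \<Longrightarrow> D \<noteq> {} \<Longrightarrow> del_vertices d c D = d (Min D) (del_vertices d c (D - {Min D}))"
  by (simp add: del_vertices_def sorted_list_of_set_nonempty)

lemma iface_eq_del_vertices: "iface d dim c F = del_vertices d c ({0..dim c} - F)"
  by (simp add: iface_def del_vertices_def)

locale semisimplicial_complex =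
  fixes S :: "'c set" and dim :: "'c \<Rightarrow> nat" and d :: "nat \<Rightarrow> 'c \<Rightarrow> 'c"
  assumes semisimplicial: "semisimplicial S dim d"
begin

lemma face_in: "c \<in> S \<Longrightarrow> i \<le> dim c \<Longrightarrow> 0 < dim c \<Longrightarrow> d i c \<in> S \<and> dim (d i c) = dim c - 1"
  using semisimplicial by (simp add: semisimplicial_def)

lemma face_face: "c \<in> S \<Longrightarrow> i < j \<Longrightarrow> j \<le> dim c \<Longrightarrow> 2 \<le> dim c \<Longrightarrow> d i (d j c) = d (j - 1) (d i c)"
  using semisimplicial by (simp add: semisimplicial_def)

lemma del_vertices_in:
  "c \<in> S \<Longrightarrow> D \<subseteq> {0..dim c} \<Longrightarrow> card D \<le> dim c \<Longrightarrow>
   del_vertices d c D \<in> S \<and> dim (del_vertices d c D) = dim c - card D"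
proof (induction "card D" arbitrary: D)
  case 0
  then have "D = {}" using finite_subset[of D "{0..dim c}"] by auto
  then show ?case using 0 by simp
next
  case (Suc k)
  have fin: "finite D" and ne: "D \<noteq> {}" using Suc finite_subset by auto
  define m where "m = Min D"
  have mD: "m \<in> D" using fin ne by (simp add: m_def)
  have card': "card (D - {m}) = k" using Suc.hyps mD fin by simp
  have IH: "del_vertices d c (D - {m}) \<in> S \<and> dim (del_vertices d c (D - {m})) = dim c - k"
    using Suc card' by auto
  have "D \<subseteq> {m..dim c}" using Suc.prems(2) fin by (auto simp: m_def)
  then have "card D \<le> dim c + 1 - m" using card_mono[of "{m..dim c}" D] by simp
  then have "m \<le> dim (del_vertices d c (D - {m}))" "0 < dim (del_vertices d c (D - {m}))"
    using IH Suc.hyps(2) Suc.prems(3) by auto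
  then have "d m (del_vertices d c (D - {m})) \<in> S \<and> dim (d m (del_vertices d c (D - {m}))) = dim c - card D"
    using face_in IH Suc.hyps(2) by auto
  then show ?case using del_vertices_Min[OF fin ne, where d=d and c=c] by (simp add: m_def)
qed

lemma del_vertices_insert_below:
  assumes "finite D" "\<forall>x\<in>D. i < x"
  shows "del_vertices d c (insert i D) = d i (del_vertices d c D)"
proof -
  have "Min (insert i D) = i" using assms by (intro Min_eqI) auto
  moreover have "i \<notin> D" using assms by auto
  ultimately show ?thesis using del_vertices_Min[of "insert i D" d c] assms by simp
qed

lemma del_vertices_face:
  "c \<in> S \<Longrightarrow> D \<subseteq> {0..dim c} \<Longrightarrow> card D < dim c \<Longrightarrow> i \<le> dim c - card D \<Longrightarrow>
   d i (del_vertices d c D) = del_vertices d c (insert (enum ({0..dim c} - D) i) D)"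
proof (induction "card D" arbitrary: D i)
  case 0
  then have "D = {}" using finite_subset[of D "{0..dim c}"] by auto
  then show ?case using 0 enum_atLeastAtMost[of i "dim c"] by (simp add: del_vertices_def)
next
  case (Suc k)
  define n where "n = dim c"
  have fin: "finite D" using finite_subset[OF Suc.prems(2)] by simp
  have ne: "D \<noteq> {}" using Suc.hyps(2) by auto
  define j where "j = Min D"
  define D' where "D' = D - {j}"
  define A where "A = {0..n} - D"
  have jD: "j \<in> D" and j_min: "\<And>x. x \<in> D \<Longrightarrow> j \<le> x" using fin ne by (simp_all add: j_def)
  have card': "card D' = k" using Suc.hyps jD fin by (simp add: D'_def)
  have D': "D' \<subseteq> {0..dim c}" using Suc.prems by (auto simp: D'_def)
  have dec: "del_vertices d c D = d j (del_vertices d c D')"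
    using del_vertices_Min[OF fin ne] by (simp add: j_def D'_def)
  have below_A: "{0..<j} \<subseteq> A" using j_min Suc.prems(2) jD by (force simp: A_def n_def)
  show ?case
  proof (cases "i < j")
    case True
    have "{a\<in>A. a < i} = {0..<i}" "i \<in> A" using below_A True by auto
    then have "enum A i = i" using enum_eqI[of A i i] by (simp add: A_def)
    moreover have "\<forall>x\<in>D. i < x" using j_min True by fastforce
    ultimately show ?thesis using del_vertices_insert_below[OF fin] by (simp add: A_def n_def)
  next
    case False
    define r0 where "r0 = del_vertices d c D'"
    have r0: "r0 \<in> S" "dim r0 = n - k"
      using del_vertices_in[OF Suc.prems(1) D'] card' Suc.prems(3) Suc.hyps(2) by (auto simp: r0_def n_def)
    have A': "{0..n} - D' = insert j A" using jD Suc.prems(2) by (auto simp: A_def D'_def n_def)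
    have "card A = n + 1 - Suc k" using Suc.prems(2) Suc.hyps(2) card_Diff_subset[OF fin] by (simp add: A_def n_def)
    moreover have jA: "j \<notin> A" and finA: "finite A" using jD by (auto simp: A_def)
    ultimately have bound: "Suc i < card (insert j A)" using Suc.prems(3,4) Suc.hyps(2) by (simp add: n_def)
    have ji: "j \<le> i" using False by simp
    note shift = enum_insert_initial[OF finA jA below_A ji bound]
    define t where "t = enum A i"
    have "t \<in> A" using enum_in[OF finA] bound jA finA by (simp add: t_def)
    then have t: "j < t" "t \<notin> D" "enum ({0..n} - D') (Suc i) = t"
      using shift A' by (auto simp: t_def A_def)
    have IH: "d (Suc i) r0 = del_vertices d c (insert t D')"
      using Suc.hyps(1)[OF card'[symmetric] Suc.prems(1) D', of "Suc i"] card' Suc.hyps(2) Suc.prems(3,4) t(3)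
      by (simp add: r0_def n_def)
    have swap: "d j (d (Suc i) r0) = d i (d j r0)"
      using face_face[OF r0(1), of j "Suc i"] False r0(2) Suc.hyps(2) Suc.prems(3,4) by (simp add: n_def)
    have Min_tD: "Min (insert t D) = j" using fin j_min jD t(1) by (intro Min_eqI) auto
    then have "insert t D - {Min (insert t D)} = insert t D'" using t(1) by (auto simp: D'_def)
    then have "del_vertices d c (insert t D) = d j (del_vertices d c (insert t D'))"
      using del_vertices_Min[of "insert t D" d c] fin Min_tD by simp
    then show ?thesis using IH swap dec by (simp add: r0_def t_def A_def n_def)
  qed
qed

lemma iface_in:
  assumes c: "c \<in> S" and F: "F \<subseteq> {0..dim c}" "F \<noteq> {}"
  shows "iface d dim c F \<in> S \<and> dim (iface d dim c F) = card F - 1"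
proof -
  have fin: "finite F" using F finite_subset by blast
  have "card ({0..dim c} - F) = dim c + 1 - card F" "card F \<le> dim c + 1" "1 \<le> card F"
    using card_Diff_subset[OF fin F(1)] card_mono[OF _ F(1)] fin F(2) by (auto simp: Suc_le_eq)
  then show ?thesis using del_vertices_in[OF c, of "{0..dim c} - F"] by (simp add: iface_eq_del_vertices)
qed

lemma iface_face:
  assumes c: "c \<in> S" and F: "F \<subseteq> {0..dim c}" "2 \<le> card F" and i: "i < card F"
  shows "d i (iface d dim c F) = iface d dim c (F - {enum F i})"
proof -
  have fin: "finite F" using F finite_subset by blast
  have "card ({0..dim c} - F) = dim c + 1 - card F" "card F \<le> dim c + 1"
    using card_Diff_subset[OF fin F(1)] card_mono[OF _ F(1)] by auto
  moreover have "{0..dim c} - ({0..dim c} - F) = F" using F by auto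
  ultimately have "d i (iface d dim c F) = del_vertices d c (insert (enum F i) ({0..dim c} - F))"
    using del_vertices_face[OF c, of "{0..dim c} - F" i] F(2) i by (simp add: iface_eq_del_vertices)
  moreover have "insert (enum F i) ({0..dim c} - F) = {0..dim c} - (F - {enum F i})"
    using enum_in[OF fin i] F by auto
  ultimately show ?thesis by (simp add: iface_eq_del_vertices)
qed

lemma iface_pair_top_face:
  assumes c: "c \<in> S" and n: "2 \<le> dim c"
  shows "iface d dim c {0, 1} = iface d dim (d (dim c) c) {0, 1}"
proof -
  have dim': "dim (d (dim c) c) = dim c - 1" using face_in[OF c, of "dim c"] n by simp
  have "{0..dim c} - {0, 1} = {2..<dim c + 1}" "{0..dim c - 1} - {0, 1} = {2..<dim c}" using n by auto
  moreover have "rev [2..<dim c + 1] = dim c # rev [2..<dim c]" using n by simp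
  ultimately show ?thesis using dim' by (simp add: iface_def)
qed

lemma remove1_last: "distinct xs \<Longrightarrow> xs \<noteq> [] \<Longrightarrow> remove1 (last xs) xs = butlast xs"
  by (induction xs rule: rev_induct) (auto simp: remove1_append)

lemma iface_edge:
  assumes c: "c \<in> S"
  shows "F \<subseteq> {0..dim c} \<Longrightarrow> sorted_list_of_set F = a0 # a1 # vs \<Longrightarrow>
    iface d dim (iface d dim c F) {0, 1} = iface d dim c {a0, a1}"
proof (induction "length vs" arbitrary: F vs)
  case 0
  then have l: "sorted_list_of_set F = [a0, a1]" by simp
  have "F = set [a0, a1]" using set_sorted_list_of_set[OF sorted_list_of_set_ConsD(1)[OF l]] l by simp
  then have "F = {a0, a1}" by simp
  moreover have "a0 < a1" using strict_sorted_list_of_set[of F] l by simp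
  ultimately have "dim (iface d dim c F) = 1" using iface_in[OF c, of F] 0 by simp
  then have "{0..dim (iface d dim c F)} - {0, 1} = {}" by auto
  then have "iface d dim (iface d dim c F) {0, 1} = iface d dim c F"
    by (simp only: iface_eq_del_vertices[of d dim "iface d dim c F"] del_vertices_empty)
  then show ?case using \<open>F = {a0, a1}\<close> by simp
next
  case (Suc k)
  have fin: "finite F" using finite_subset[OF Suc.prems(1)] by simp
  have card: "card F = k + 3" using Suc length_sorted_list_of_set[of F] by simp
  define x where "x = last vs"
  have "vs \<noteq> []" using Suc.hyps(2) by auto
  then have x: "enum F (card F - 1) = x"
    using card Suc.prems(2) Suc.hyps(2) by (simp add: enum_def x_def last_conv_nth)
  have l': "sorted_list_of_set (F - {x}) = a0 # a1 # butlast vs"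
    using sorted_list_of_set_remove[OF fin, of x] Suc.prems(2) remove1_last[of "a0 # a1 # vs"]
      distinct_sorted_list_of_set[of F] \<open>vs \<noteq> []\<close> by (simp add: x_def)
  have F': "F - {x} \<subseteq> {0..dim c}" using Suc.prems(1) by auto
  have c': "iface d dim c F \<in> S" "dim (iface d dim c F) = card F - 1"
  proof -
    have "F \<noteq> {}" using card by auto
    then show "iface d dim c F \<in> S" "dim (iface d dim c F) = card F - 1"
      using iface_in[OF c Suc.prems(1)] by auto
  qed
  have "iface d dim (iface d dim c F) {0, 1} = iface d dim (d (card F - 1) (iface d dim c F)) {0, 1}"
    using iface_pair_top_face[OF c'(1)] c'(2) card by simp
  also have "d (card F - 1) (iface d dim c F) = iface d dim c (F - {x})"
    using iface_face[OF c Suc.prems(1)] card x by simp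
  also have "iface d dim (iface d dim c (F - {x})) {0, 1} = iface d dim c {a0, a1}"
    using Suc.hyps(1)[OF _ F' l'] Suc.hyps(2) by simp
  finally show ?case .
qed

end

lemma ss_map_del_vertices:
  assumes f: "ss_map S dim d B dimB dB f" and S: "semisimplicial_complex S dim d" and c: "c \<in> S"
  shows "D \<subseteq> {0..dim c} \<Longrightarrow> card D \<le> dim c \<Longrightarrow> f (del_vertices d c D) = del_vertices dB (f c) D"
proof (induction "card D" arbitrary: D)
  case 0
  then have "D = {}" using finite_subset[of D "{0..dim c}"] by auto
  then show ?case by simp
next
  case (Suc k)
  have fin: "finite D" using finite_subset[OF Suc.prems(1)] by simp
  have ne: "D \<noteq> {}" using Suc.hyps(2) by auto
  define m where "m = Min D"
  have card': "card (D - {m}) = k" using Suc.hyps(2) fin ne by (simp add: m_def)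
  have IH: "f (del_vertices d c (D - {m})) = del_vertices dB (f c) (D - {m})"
    using Suc card' by auto
  have "D \<subseteq> {m..dim c}" using Suc.prems(1) fin by (auto simp: m_def)
  then have "card D \<le> dim c + 1 - m" using card_mono[of "{m..dim c}" D] by simp
  moreover have "D - {m} \<subseteq> {0..dim c}" "card (D - {m}) \<le> dim c"
    using Suc.prems Suc.hyps(2) card' by auto
  then have "del_vertices d c (D - {m}) \<in> S \<and> dim (del_vertices d c (D - {m})) = dim c - k"
    using semisimplicial_complex.del_vertices_in[OF S c] card' by blast
  ultimately have "f (d m (del_vertices d c (D - {m}))) = dB m (f (del_vertices d c (D - {m})))"
    using f Suc.hyps(2) Suc.prems(2) unfolding ss_map_def by auto
  then show ?case
    using IH del_vertices_Min[OF fin ne, where d=d and c=c] del_vertices_Min[OF fin ne, where d=dB and c="f c"]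
    by (simp add: m_def)
qed

lemma ss_map_iface:
  assumes f: "ss_map S dim d B dimB dB f" and S: "semisimplicial_complex S dim d" and c: "c \<in> S"
    and F: "F \<subseteq> {0..dim c}" "F \<noteq> {}"
  shows "f (iface d dim c F) = iface dB dimB (f c) F"
proof -
  have fin: "finite F" using finite_subset[OF F(1)] by simp
  have "0 < card F" using fin F(2) by (simp add: card_gt_0_iff)
  then have "card ({0..dim c} - F) \<le> dim c" using card_Diff_subset[OF fin F(1)] by simp
  moreover have "dimB (f c) = dim c" using f c by (simp add: ss_map_def)
  ultimately show ?thesis
    using ss_map_del_vertices[OF f S c, of "{0..dim c} - F"] by (simp add: iface_eq_del_vertices)
qed

section \<open>The inverse monoid \<open>M(X,P)\<close>\<close>

lemma winv_Nil[simp]: "winv [] = []"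
  by (simp add: winv_def)

lemma winv_Cons[simp]: "winv ((b, e) # u) = winv u @ [(b, \<not> e)]"
  by (simp add: winv_def)

lemma winv_append[simp]: "winv (u @ v) = winv v @ winv u"
  by (simp add: winv_def)

lemma winv_winv[simp]: "winv (winv u) = u"
  by (induction u) (auto simp: winv_def)

lemma winv_lists: "u \<in> lists (alph B dimB) \<Longrightarrow> winv u \<in> lists (alph B dimB)"
  by (induction u) (auto simp: winv_def alph_def)

lemma bl_lists:
  assumes B: "semisimplicial_complex B dimB dB" and b: "b \<in> B" "2 \<le> dimB b"
  shows "bl dimB dB b \<in> lists (alph B dimB)"
proof -
  have "dB i b \<in> B \<and> 1 \<le> dimB (dB i b)" if "i \<le> dimB b" for i
    using semisimplicial_complex.face_in[OF B b(1) that] b(2) by simp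
  moreover have "iface dB dimB b {0, 1} \<in> B \<and> dimB (iface dB dimB b {0, 1}) = 1"
    using semisimplicial_complex.iface_in[OF B b(1), of "{0, 1}"] b(2) by simp
  ultimately show ?thesis using b(1) by (auto simp: bl_def alph_def Let_def)
qed

locale word_presentation =
  fixes B :: "'b set" and dimB :: "'b \<Rightarrow> nat" and dB :: "nat \<Rightarrow> 'b \<Rightarrow> 'b"
  assumes semisimplicial_B: "semisimplicial_complex B dimB dB"
begin

abbreviation "M \<equiv> Meq B dimB dB"
abbreviation "W \<equiv> lists (alph B dimB)"

lemma Meq_words: "M u v \<Longrightarrow> u \<in> W \<longleftrightarrow> v \<in> W"
proof (induction rule: Meq.induct)
  case (wagner1 u) then show ?case using winv_lists[of u] by auto
next
  case (wagner2 u v) then show ?case using winv_lists[of u] winv_lists[of v] by auto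
next
  case (rel b) then show ?case using bl_lists[OF semisimplicial_B, of b] by auto
qed auto

lemma Meq_append: "M u u' \<Longrightarrow> M v v' \<Longrightarrow> u' \<in> W \<Longrightarrow> v \<in> W \<Longrightarrow> M (u @ v) (u' @ v')"
proof -
  assume h: "M u u'" "M v v'" "u' \<in> W" "v \<in> W"
  have "M ([] @ u @ v) ([] @ u' @ v)" by (rule Meq.cong[OF h(1)]) (use h in auto)
  moreover have "M (u' @ v @ []) (u' @ v' @ [])" by (rule Meq.cong[OF h(2)]) (use h in auto)
  ultimately show ?thesis using Meq.trans by auto
qed

definition wclass :: "('b \<times> bool) list \<Rightarrow> ('b \<times> bool) list set" where
  "wclass w = {v. M w v}"

lemma wclass_eq_iff: "wclass u = wclass v \<longleftrightarrow> M u v"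
proof
  assume "wclass u = wclass v"
  then have "v \<in> wclass u" using Meq.refl[of B dimB dB v] by (simp add: wclass_def)
  then show "M u v" by (simp add: wclass_def)
next
  assume "M u v"
  then show "wclass u = wclass v" unfolding wclass_def using Meq.sym Meq.trans by blast
qed

definition classes :: "('b \<times> bool) list set set" where "classes = wclass ` W"
definition rep :: "('b \<times> bool) list set \<Rightarrow> ('b \<times> bool) list" where
  "rep X = (SOME w. w \<in> W \<and> X = wclass w)"
definition qmul where "qmul X Y = wclass (rep X @ rep Y)"
definition qinv where "qinv X = wclass (winv (rep X))"
definition qone where "qone = wclass []"

lemma rep_wclass: "u \<in> W \<Longrightarrow> rep (wclass u) \<in> W \<and> M u (rep (wclass u))"
proof -
  assume u: "u \<in> W"
  then have "\<exists>w. w \<in> W \<and> wclass u = wclass w" by blast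
  then have "rep (wclass u) \<in> W \<and> wclass u = wclass (rep (wclass u))" unfolding rep_def by (rule someI_ex)
  then show ?thesis using wclass_eq_iff by blast
qed

lemma qmul_wclass[simp]: "u \<in> W \<Longrightarrow> v \<in> W \<Longrightarrow> qmul (wclass u) (wclass v) = wclass (u @ v)"
  unfolding qmul_def wclass_eq_iff using rep_wclass[of u] rep_wclass[of v] by (metis Meq_append Meq.sym)

lemma classes_cases: "X \<in> classes \<Longrightarrow> (\<And>u. u \<in> W \<Longrightarrow> X = wclass u \<Longrightarrow> P) \<Longrightarrow> P"
  unfolding classes_def by blast

lemma wclass_in_classes[simp]: "u \<in> W \<Longrightarrow> wclass u \<in> classes"
  by (simp add: classes_def)

sublocale Qm: monoid_on classes qmul qone
proof
  fix x y z assume "x \<in> classes" "y \<in> classes" "z \<in> classes"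
  then show "qmul x y \<in> classes" "qmul (qmul x y) z = qmul x (qmul y z)"
    by (elim classes_cases; simp)+
next
  fix x assume "x \<in> classes"
  then show "qmul qone x = x" "qmul x qone = x" by (elim classes_cases; simp add: qone_def)+
qed (simp add: qone_def)

lemma wclass_idem_winv:
  assumes x: "x \<in> W" and xx: "wclass (x @ x) = wclass x"
  shows "wclass (winv x) = wclass x"
proof (rule Qm.wagner_inverse_of_idem)
  have wx: "winv x \<in> W" using winv_lists x by blast
  show "qmul (qmul (wclass x) (wclass (winv x))) (wclass x) = wclass x"
    using x wx Meq.wagner1[OF x] wclass_eq_iff by simp
  show "qmul (qmul (wclass (winv x)) (wclass x)) (wclass (winv x)) = wclass (winv x)"
    using x wx Meq.wagner1[OF wx] wclass_eq_iff by simp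
  show "qmul (qmul (wclass (winv x)) (wclass x)) (qmul (wclass x) (wclass (winv x))) =
      qmul (qmul (wclass x) (wclass (winv x))) (qmul (wclass (winv x)) (wclass x))"
    using x wx Meq.wagner2[OF wx x] wclass_eq_iff by simp
  show "qmul (wclass x) (wclass x) = wclass x" using x xx by simp
qed (use x winv_lists[of x] in simp_all)

lemma letter_in_words: "b \<in> B \<Longrightarrow> 1 \<le> dimB b \<Longrightarrow> [(b, e)] \<in> W"
  by (simp add: alph_def)

lemma wclass_cell_idem:
  "b \<in> B \<Longrightarrow> 2 \<le> dimB b \<Longrightarrow> wclass ([(b, False)] @ [(b, False)]) = wclass [(b, False)]"
  using Meq.idem wclass_eq_iff by simp

lemma wclass_cell_inv:
  assumes b: "b \<in> B" "2 \<le> dimB b"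
  shows "wclass [(b, True)] = wclass [(b, False)]"
  using wclass_idem_winv[OF letter_in_words[of b False] wclass_cell_idem[OF b]] b by simp

text \<open>The inverse of the relation \<open>\<rho> = \<rho> bl(\<rho>)\<close> is again a consequence of the relations: with
  \<open>z = bl(\<rho>)\<^sup>-\<^sup>1 \<rho>\<close> one gets \<open>z z\<^sup>-\<^sup>1 = z\<close>, so \<open>z\<close> is idempotent and equal to \<open>z\<^sup>-\<^sup>1 = \<rho>\<close>.\<close>

lemma wclass_cell_rel_inv:
  assumes b: "b \<in> B" "2 \<le> dimB b"
  shows "wclass (winv (bl dimB dB b) @ [(b, True)]) = wclass [(b, True)]"
proof -
  define w where "w = bl dimB dB b"
  define z where "z = winv w @ [(b, False)]"
  define \<beta> \<omega> \<omega>' where "\<beta> = wclass [(b, False)]" and "\<omega> = wclass w" and "\<omega>' = wclass (winv w)"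
  have wW: "w \<in> W" using bl_lists[OF semisimplicial_B b] by (simp add: w_def)
  have W: "winv w \<in> W" "[(b, False)] \<in> W" "[(b, True)] \<in> W"
    using winv_lists[OF wW] letter_in_words b by auto
  then have zW: "z \<in> W" "winv z \<in> W" using wW by (auto simp: z_def)
  have G: "\<beta> \<in> classes" "\<omega> \<in> classes" "\<omega>' \<in> classes" using wW W by (simp_all add: \<beta>_def \<omega>_def \<omega>'_def)
  have \<beta>\<beta>: "qmul \<beta> \<beta> = \<beta>" using wclass_cell_idem[OF b] W by (simp add: \<beta>_def)
  have \<beta>inv: "wclass [(b, True)] = \<beta>" using wclass_cell_inv[OF b] by (simp add: \<beta>_def)
  have \<beta>\<omega>: "qmul \<beta> \<omega> = \<beta>"
    using Meq.sym[OF Meq.rel[where B=B and dimB=dimB and dB=dB, OF b]] wclass_eq_iff wW W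
    by (simp add: \<beta>_def \<omega>_def w_def)
  have z: "wclass z = qmul \<omega>' \<beta>" using W by (simp add: z_def \<omega>'_def \<beta>_def)
  have "wclass (winv z) = qmul (wclass [(b, True)]) \<omega>" using wW W by (simp add: z_def \<omega>_def)
  then have z': "wclass (winv z) = \<beta>" using \<beta>inv \<beta>\<omega> by simp
  have "qmul (wclass z) (wclass z) = qmul (qmul (wclass z) \<beta>) (wclass z)" using z G \<beta>\<beta> by simp
  also have "\<dots> = wclass (z @ winv z @ z)" unfolding z'[symmetric] using zW by simp
  also have "\<dots> = wclass z"
    using Meq.wagner1[where dB=dB, OF zW(1)] wclass_eq_iff by simp
  finally have "wclass (winv z) = wclass z" using wclass_idem_winv[OF zW(1)] zW by simp
  then have "qmul \<omega>' \<beta> = \<beta>" using z z' by simp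
  moreover have "wclass (winv w @ [(b, True)]) = qmul \<omega>' (wclass [(b, True)])"
    using W by (simp add: \<omega>'_def)
  ultimately show ?thesis using \<beta>inv by (simp add: w_def)
qed

lemma Meq_winv: "M u v \<Longrightarrow> u \<in> W \<Longrightarrow> M (winv u) (winv v)"
proof (induction rule: Meq.induct)
  case (refl u) show ?case by (rule Meq.refl)
next
  case (sym u v) then show ?case using Meq_words Meq.sym by blast
next
  case (trans u v w) then show ?case using Meq_words Meq.trans by blast
next
  case (cong u v x y)
  have "M (winv y @ winv u @ winv x) (winv y @ winv v @ winv x)"
    by (rule Meq.cong) (use cong winv_lists in auto)
  then show ?case by simp
next
  case (wagner1 u)
  have "M (winv u @ winv (winv u) @ winv u) (winv u)"
    by (rule Meq.wagner1) (use wagner1 winv_lists in auto)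
  then show ?case by simp
next
  case (wagner2 u v)
  have "M (v @ winv v @ u @ winv u) (u @ winv u @ v @ winv v)" by (rule Meq.wagner2) (use wagner2 in auto)
  then show ?case by simp
next
  case (idem b)
  have W: "[(b, True)] \<in> W" "[(b, False)] \<in> W" using letter_in_words idem(1,2) by auto
  have "wclass ([(b, True)] @ [(b, True)]) = qmul (wclass [(b, True)]) (wclass [(b, True)])"
    using W by simp
  also have "\<dots> = wclass ([(b, False)] @ [(b, False)])" using wclass_cell_inv[OF idem(1,2)] W by simp
  also have "\<dots> = wclass [(b, True)]"
    using wclass_cell_idem[OF idem(1,2)] wclass_cell_inv[OF idem(1,2)] by simp
  finally have "wclass ([(b, True)] @ [(b, True)]) = wclass [(b, True)]" .
  then show ?case using wclass_eq_iff by (simp add: winv_def)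
next
  case (rel b)
  then show ?case using wclass_cell_rel_inv[OF rel(1,2)] wclass_eq_iff Meq.sym by (simp add: winv_def)
qed

lemma qinv_wclass[simp]: "u \<in> W \<Longrightarrow> qinv (wclass u) = wclass (winv u)"
  unfolding qinv_def wclass_eq_iff using rep_wclass[of u] Meq_winv Meq.sym by blast

sublocale Q: inverse_monoid classes qmul qone qinv
proof
  fix x assume "x \<in> classes"
  then show "qinv x \<in> classes" "qinv (qinv x) = x" "qmul (qmul x (qinv x)) x = x"
    by (elim classes_cases; simp add: winv_lists Meq.wagner1 wclass_eq_iff)+
next
  fix x y assume "x \<in> classes" "y \<in> classes"
  then show "qinv (qmul x y) = qmul (qinv y) (qinv x)"
    "qmul (qmul x (qinv x)) (qmul y (qinv y)) = qmul (qmul y (qinv y)) (qmul x (qinv x))"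
    by (elim classes_cases; simp add: winv_lists Meq.wagner2 wclass_eq_iff)+
qed (simp add: qone_def)

lemma wclass_word: "w \<in> W \<Longrightarrow> wclass w = Qm.mprod (map (\<lambda>l. wclass [l]) w)"
proof (induction w)
  case (Cons a w)
  then show ?case using qmul_wclass[of "[a]" w] by simp
qed (simp add: qone_def[symmetric])

end

section \<open>The cell and its faces\<close>

text \<open>\<open>face_label F\<close> is the label of the face of \<open>C\<close> with vertex set \<open>F\<close>; its class in \<open>M(X,P)\<close>
  plays the role of \<open>X F\<close> in \<open>simplex_labelling\<close>.\<close>

locale labelled_cell = word_presentation B dimB dB
  for B :: "'b set" and dimB and dB +
  fixes S :: "'c set" and dim :: "'c \<Rightarrow> nat" and d :: "nat \<Rightarrow> 'c \<Rightarrow> 'c"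
    and f :: "'c \<Rightarrow> 'b" and C :: 'c
  assumes semisimplicial_S: "semisimplicial_complex S dim d"
    and f_map: "ss_map S dim d B dimB dB f"
    and C_in: "C \<in> S"
begin

definition face_label :: "nat set \<Rightarrow> 'b" where
  "face_label F = f (iface d dim C F)"

definition face_class :: "nat set \<Rightarrow> ('b \<times> bool) list set" where
  "face_class F = wclass [(face_label F, False)]"

lemma iface_cell_in:
  "F \<subseteq> {0..dim C} \<Longrightarrow> F \<noteq> {} \<Longrightarrow> iface d dim C F \<in> S \<and> dim (iface d dim C F) = card F - 1"
  using semisimplicial_complex.iface_in[OF semisimplicial_S C_in] .

lemma face_label_in:
  "F \<subseteq> {0..dim C} \<Longrightarrow> F \<noteq> {} \<Longrightarrow> face_label F \<in> B \<and> dimB (face_label F) = card F - 1"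
  using iface_cell_in f_map by (auto simp: face_label_def ss_map_def)

lemma face_letter_in: "F \<subseteq> {0..dim C} \<Longrightarrow> 2 \<le> card F \<Longrightarrow> [(face_label F, e)] \<in> W"
  using face_label_in[of F] letter_in_words by force

lemma face_label_face:
  assumes F: "F \<subseteq> {0..dim C}" "2 \<le> card F" and i: "i < card F"
  shows "dB i (face_label F) = face_label (F - {enum F i})"
proof -
  have "F \<noteq> {}" using F(2) by auto
  then have "iface d dim C F \<in> S" "i \<le> dim (iface d dim C F)" "0 < dim (iface d dim C F)"
    using iface_cell_in[OF F(1)] F(2) i by auto
  then have "f (d i (iface d dim C F)) = dB i (f (iface d dim C F))"
    using f_map unfolding ss_map_def by blast
  then show ?thesis
    using semisimplicial_complex.iface_face[OF semisimplicial_S C_in F i] by (simp add: face_label_def)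
qed

lemma face_label_edge:
  assumes F: "F \<subseteq> {0..dim C}" and l: "sorted_list_of_set F = a0 # a1 # vs"
  shows "iface dB dimB (face_label F) {0, 1} = face_label {a0, a1}"
proof -
  have "2 \<le> card F" using l length_sorted_list_of_set[of F] by simp
  moreover from this have "F \<noteq> {}" by auto
  ultimately have c': "iface d dim C F \<in> S" "1 \<le> dim (iface d dim C F)" using iface_cell_in[OF F] by auto
  then have "f (iface d dim (iface d dim C F) {0, 1}) = iface dB dimB (face_label F) {0, 1}"
    using ss_map_iface[OF f_map semisimplicial_S c'(1), of "{0, 1}"] by (simp add: face_label_def)
  then show ?thesis
    using semisimplicial_complex.iface_edge[OF semisimplicial_S C_in F l] by (simp add: face_label_def)
qed

lemma face_class_relation:
  assumes F: "F \<subseteq> {0..dim C}" "3 \<le> card F"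
  shows "face_class F = qmul (face_class F) (Qm.mprod (map (\<lambda>l. wclass [l]) (bl dimB dB (face_label F))))"
proof -
  have "F \<noteq> {}" using F(2) by auto
  then have b: "face_label F \<in> B" "2 \<le> dimB (face_label F)" using face_label_in[OF F(1)] F(2) by auto
  have W: "bl dimB dB (face_label F) \<in> W" "[(face_label F, False)] \<in> W"
    using bl_lists[OF semisimplicial_B b] face_letter_in[OF F(1)] F(2) by auto
  have "face_class F = wclass ([(face_label F, False)] @ bl dimB dB (face_label F))"
    using Meq.rel[where B=B and dimB=dimB and dB=dB, OF b] wclass_eq_iff by (simp add: face_class_def)
  also have "\<dots> = qmul (face_class F) (wclass (bl dimB dB (face_label F)))"
    using W by (simp add: face_class_def)
  finally show ?thesis unfolding wclass_word[OF W(1)] .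
qed

lemma bl_face_label_triangle:
  assumes F: "F \<subseteq> {0..dim C}" and l: "sorted_list_of_set F = [a, b, c]"
  shows "bl dimB dB (face_label F) =
    [(face_label {a, b}, False), (face_label {b, c}, False), (face_label {a, c}, True)]"
proof -
  note F_eq = sorted_list_of_set_eq_three(1)[OF l]
    and ab = sorted_list_of_set_eq_three(2)[OF l] and bc = sorted_list_of_set_eq_three(3)[OF l]
  have card: "card F = 3" using l length_sorted_list_of_set[of F] by simp
  have enum: "enum F 0 = a" "enum F 1 = b" "enum F 2 = c" using l by (simp_all add: enum_def)
  have pairs: "F - {c} = {a, b}" "F - {a} = {b, c}" "F - {b} = {a, c}" using F_eq ab bc by auto
  have "F \<noteq> {}" using F_eq by simp
  then have dim2: "dimB (face_label F) = 2" using face_label_in[OF F] card by simp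
  have "dB i (face_label F) = face_label (F - {enum F i})" if "i < 3" for i
    using face_label_face[OF F] card that by simp
  then show ?thesis using dim2 enum pairs by (simp add: bl_def)
qed

lemma bl_face_label_cell:
  assumes F: "F \<subseteq> {0..dim C}" and l: "sorted_list_of_set F = a0 # a1 # vs" and vs: "2 \<le> length vs"
  shows "bl dimB dB (face_label F) = map (\<lambda>v. (face_label (F - {v}), False)) (rev (a1 # vs))
    @ [(face_label {a0, a1}, False), (face_label (F - {a0}), False), (face_label {a0, a1}, True)]"
proof -
  have card: "card F = length vs + 2" using l length_sorted_list_of_set[of F] by simp
  then have "F \<noteq> {}" by auto
  then have dim: "dimB (face_label F) = length vs + 1" using face_label_in[OF F] card by simp
  have enum: "enum F i = (a0 # a1 # vs) ! i" for i using l by (simp add: enum_def)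
  have "map (\<lambda>i. (dB i (face_label F), False)) [1..<Suc (length (a1 # vs))]
      = map (\<lambda>v. (face_label (F - {v}), False)) (map (\<lambda>i. (a0 # a1 # vs) ! i) [1..<Suc (length (a1 # vs))])"
    using face_label_face[OF F] card vs enum by (simp add: comp_def)
  also have "\<dots> = map (\<lambda>v. (face_label (F - {v}), False)) (a1 # vs)"
    by (simp only: map_nth_Cons_upt)
  finally have "rev (map (\<lambda>i. (dB i (face_label F), False)) [1..<Suc (length (a1 # vs))])
      = rev (map (\<lambda>v. (face_label (F - {v}), False)) (a1 # vs))" by (rule arg_cong)
  moreover have "dimB (face_label F) + 1 = Suc (length (a1 # vs))" using dim by simp
  ultimately have facets: "map (\<lambda>i. (dB i (face_label F), False)) (rev [1..<dimB (face_label F) + 1])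
      = map (\<lambda>v. (face_label (F - {v}), False)) (rev (a1 # vs))"
    by (simp only: rev_map)
  have "dB 0 (face_label F) = face_label (F - {a0})"
    using face_label_face[OF F, of 0] card enum by simp
  then show ?thesis using dim vs facets face_label_edge[OF F l] by (simp add: bl_def Let_def)
qed

lemma face_class_triangle_relation:
  assumes F: "F \<subseteq> {0..dim C}" and l: "sorted_list_of_set F = [a, b, c]"
  shows "face_class F = qmul (qmul (qmul (face_class F) (face_class {a, b})) (face_class {b, c}))
    (qinv (face_class {a, c}))"
proof -
  note F_eq = sorted_list_of_set_eq_three(1)[OF l]
    and ab = sorted_list_of_set_eq_three(2)[OF l] and bc = sorted_list_of_set_eq_three(3)[OF l]
  have card: "card F = 3" using l length_sorted_list_of_set[of F] by simp
  have sub: "{a, b} \<subseteq> {0..dim C}" "{b, c} \<subseteq> {0..dim C}" "{a, c} \<subseteq> {0..dim C}"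
    using F F_eq by auto
  have W: "[(face_label {a, b}, e)] \<in> W" "[(face_label {b, c}, e)] \<in> W" "[(face_label {a, c}, e)] \<in> W"
    for e using face_letter_in[OF sub(1)] face_letter_in[OF sub(2)] face_letter_in[OF sub(3)] ab bc by auto
  have G: "face_class F \<in> classes" "face_class {a, b} \<in> classes"
    "face_class {b, c} \<in> classes" "face_class {a, c} \<in> classes"
    using W face_letter_in[OF F, of False] card by (simp_all add: face_class_def)
  have "face_class F = qmul (face_class F) (Qm.mprod (map (\<lambda>l. wclass [l]) (bl dimB dB (face_label F))))"
    by (rule face_class_relation[OF F]) (simp add: card)
  also have "Qm.mprod (map (\<lambda>l. wclass [l]) (bl dimB dB (face_label F)))
      = qmul (face_class {a, b}) (qmul (face_class {b, c}) (qinv (face_class {a, c})))"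
    using W by (simp add: bl_face_label_triangle[OF F l] face_class_def)
  also have "qmul (face_class F) \<dots>
      = qmul (qmul (qmul (face_class F) (face_class {a, b})) (face_class {b, c})) (qinv (face_class {a, c}))"
    using G by simp
  finally show ?thesis .
qed

lemma face_class_cell_relation:
  assumes F: "F \<subseteq> {0..dim C}" and l: "sorted_list_of_set F = a0 # a1 # vs" and vs: "2 \<le> length vs"
  shows "face_class F = qmul (qmul (qmul (qmul (face_class F)
    (Qm.mprod (map (\<lambda>v. face_class (F - {v})) (rev (a1 # vs))))) (face_class {a0, a1}))
    (face_class (F - {a0}))) (qinv (face_class {a0, a1}))"
proof -
  define P where "P = Qm.mprod (map (\<lambda>v. face_class (F - {v})) (rev (a1 # vs)))"
  have fin: "finite F" using finite_subset[OF F] by simp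
  have card: "card F = length vs + 2" using l length_sorted_list_of_set[of F] by simp
  have set: "set (a0 # a1 # vs) = F" using l set_sorted_list_of_set[OF fin] by simp
  have "a0 < a1" using strict_sorted_list_of_set[of F] l by simp
  then have pair: "{a0, a1} \<subseteq> {0..dim C}" "2 \<le> card {a0, a1}" using set F by auto
  have facet: "F - {v} \<subseteq> {0..dim C}" "2 \<le> card (F - {v})" if "v \<in> F" for v
    using that F card vs fin by auto
  have facets_in: "set (map (\<lambda>v. face_class (F - {v})) (rev (a1 # vs))) \<subseteq> classes"
    using face_letter_in[OF facet] set by (auto simp: face_class_def)
  have "a0 \<in> F" using set by auto
  then have G: "face_class F \<in> classes" "face_class {a0, a1} \<in> classes" "face_class (F - {a0}) \<in> classes"
    "P \<in> classes"
    using face_letter_in[OF F, of False] face_letter_in[OF pair, of False]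
      face_letter_in[OF facet[of a0], of False] card Qm.mprod_closed[OF facets_in]
    by (simp_all add: face_class_def P_def)
  have letters: "map (\<lambda>l. wclass [l]) (bl dimB dB (face_label F)) = map (\<lambda>v. face_class (F - {v})) (rev (a1 # vs))
      @ [face_class {a0, a1}, face_class (F - {a0}), qinv (face_class {a0, a1})]"
    using face_letter_in[OF pair, of False] by (simp add: bl_face_label_cell[OF F l vs] face_class_def comp_def)
  have "face_class F = qmul (face_class F) (Qm.mprod (map (\<lambda>l. wclass [l]) (bl dimB dB (face_label F))))"
    by (rule face_class_relation[OF F]) (use card vs in simp)
  also have "Qm.mprod (map (\<lambda>l. wclass [l]) (bl dimB dB (face_label F)))
      = qmul P (qmul (face_class {a0, a1}) (qmul (face_class (F - {a0})) (qinv (face_class {a0, a1}))))"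
    using facets_in G unfolding letters P_def
    by (simp only: Qm.mprod_append Qm.mprod_Cons Qm.mprod_Nil Qm.right_unit Q.inv_closed set_simps
        insert_subset empty_subsetI simp_thms)
  also have "qmul (face_class F) \<dots> = qmul (qmul (qmul (qmul (face_class F) P) (face_class {a0, a1}))
      (face_class (F - {a0}))) (qinv (face_class {a0, a1}))"
    by (simp only: Qm.assoc G Q.inv_closed Qm.mul_closed)
  finally show ?thesis unfolding P_def .
qed

sublocale L: simplex_labelling classes qmul qone qinv "{0..dim C}" face_class
proof
  fix F assume "F \<subseteq> {0..dim C}" "2 \<le> card F"
  then show "face_class F \<in> classes" using face_letter_in by (simp add: face_class_def)
next
  fix F assume F: "F \<subseteq> {0..dim C}" "3 \<le> card F"
  then have "F \<noteq> {}" by auto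
  then show "Q.idem (face_class F)"
    using wclass_cell_idem face_label_in[OF F(1)] face_letter_in[OF F(1)] F(2)
    by (simp add: Q.idem_def face_class_def)
next
  show "face_class F = qmul (qmul (qmul (face_class F) (face_class {a, b})) (face_class {b, c}))
      (qinv (face_class {a, c}))" if "F \<subseteq> {0..dim C}" "sorted_list_of_set F = [a, b, c]" for F a b c
    using face_class_triangle_relation that .
next
  show "face_class F = qmul (qmul (qmul (qmul (face_class F)
      (Qm.mprod (map (\<lambda>v. face_class (F - {v})) (rev (a1 # vs))))) (face_class {a0, a1}))
      (face_class (F - {a0}))) (qinv (face_class {a0, a1}))"
    if "F \<subseteq> {0..dim C}" "sorted_list_of_set F = a0 # a1 # vs" "2 \<le> length vs" for F a0 a1 vs
    using face_class_cell_relation that .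
qed

lemma step_letter_class:
  assumes "boundary_step {0..dim C} s"
  shows "wclass [(face_label (fst s), snd s)] = L.step_label s"
proof -
  obtain F iv where s: "s = (F, iv)" by (cases s)
  then have "F \<subseteq> {0..dim C}" "2 \<le> card F" using assms by (auto simp: boundary_step_def)
  then show ?thesis
    using face_letter_in[of F False] by (simp add: s L.step_label_def face_class_def)
qed

lemma img_label_class:
  assumes "\<forall>s\<in>set q. boundary_step {0..dim C} s"
  shows "img_label f d dim C q \<in> W" "wclass (img_label f d dim C q) = Qm.mprod (map L.step_label q)"
proof -
  have img: "img_label f d dim C q = map (\<lambda>s. (face_label (fst s), snd s)) q"
    by (auto simp: img_label_def face_label_def)
  have letters: "[(face_label (fst s), snd s)] \<in> W" if "s \<in> set q" for s
    using assms that face_letter_in by (cases s) (auto simp: boundary_step_def)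
  then show "img_label f d dim C q \<in> W" unfolding img by auto
  then have "wclass (img_label f d dim C q) = Qm.mprod (map (\<lambda>l. wclass [l]) (img_label f d dim C q))"
    by (rule wclass_word)
  also have "\<dots> = Qm.mprod (map L.step_label q)"
    unfolding img map_map comp_def
    using step_letter_class assms by (intro arg_cong[where f = Qm.mprod] map_cong) auto
  finally show "wclass (img_label f d dim C q) = Qm.mprod (map L.step_label q)" .
qed

lemma face_class_whole: "face_class {0..dim C} = wclass [(f C, False)]"
  by (simp add: face_class_def face_label_def iface_def)

theorem cell_le_closed_path:
  assumes k: "2 \<le> dim C" and q: "closed_gpath_bd (dim C) 0 q"
  shows "Mle B dimB dB [(f C, False)] (img_label f d dim C q)"
proof -
  have steps: "\<forall>s\<in>set q. boundary_step {0..dim C} s"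
    using q by (simp add: closed_gpath_bd_def bd_step_def boundary_step_def)
  have chain: "successively (\<lambda>s t. st_omega s = st_alpha t) q"
    using q by (auto simp: closed_gpath_bd_def intro: successively_if_nth)
  have "Min {0..dim C} = 0" by (rule Min_eqI) auto
  then have stab: "qmul (face_class {0..dim C}) (Qm.mprod (map L.step_label q)) = face_class {0..dim C}"
    by (intro L.closed_boundary_path_stab[OF _ _ steps chain]) (use k q in \<open>auto simp: closed_gpath_bd_def\<close>)
  have fC: "[(f C, False)] \<in> W" "f C \<in> B" "dimB (f C) = dim C"
    using f_map C_in k by (auto simp: ss_map_def alph_def)
  note img = img_label_class[OF steps]
  have "wclass ([(f C, False)] @ img_label f d dim C q)
      = qmul (wclass [(f C, False)]) (wclass (img_label f d dim C q))"
    using fC(1) img(1) by simp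
  also have "\<dots> = wclass [(f C, False)]"
    using stab img(2) face_class_whole by simp
  finally have "M [(f C, False)] ([(f C, False)] @ img_label f d dim C q)"
    using wclass_eq_iff Meq.sym by blast
  moreover have "M ([(f C, False)] @ [(f C, False)]) [(f C, False)]"
    using Meq.idem[of "f C" B dimB dB] fC k by simp
  ultimately show ?thesis using fC(1) unfolding Mle_def by blast
qed

end

theorem mainTheorem7:
  fixes S :: "'c set" and dim :: "'c \<Rightarrow> nat" and d :: "nat \<Rightarrow> 'c \<Rightarrow> 'c"
    and B :: "'b set" and dimB :: "'b \<Rightarrow> nat" and dB :: "nat \<Rightarrow> 'b \<Rightarrow> 'b"
    and n :: nat and f :: "'c \<Rightarrow> 'b" and C :: 'c and q :: "(nat set \<times> bool) list"
  assumes "is_BXP n B dimB dB"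
    and "semisimplicial S dim d"
    and "immersion S dim d B dimB dB f"
    and "C \<in> S" and "2 \<le> dim C"
    and "closed_gpath_bd (dim C) 0 q"
  shows "Mle B dimB dB [(f C, False)] (img_label f d dim C q)"
proof -
  interpret labelled_cell B dimB dB S dim d f C
    using assms(1-4) by unfold_locales (simp_all add: is_BXP_def immersion_def semisimplicial_complex_def)
  show ?thesis using cell_le_closed_path assms(5,6) .
qed

end
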